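(* Let $n\ge 3$ be an odd integer and $(\mathcal{C},\Sigma)$ an $n$-angulated category. For a subgroup $H$ of $K_0(\mathcal{C})$, let $\mathcal{A}_H$ be the full subcategory of $\mathcal{C}$ consisting of the objects $A$ with $[A]\in H$. Declare the $n$-angles of $\mathcal{A}_H$ to be those $n$-angles of $\mathcal{C}$ all of whose objects lie in $\mathcal{A}_H$. Then $(\mathcal{A}_H,\Sigma)$ is a complete and dense $n$-angulated subcategory of $(\mathcal{C},\Sigma)$.
   Context: All categories are small. Fix an integer $n\ge 3$. Let $\mathcal{C}$ be an additive category with an automorphism $\Sigma$. An $n$-$\Sigma$-sequence in $\mathcal{C}$ is a diagram $A_1\xrightarrow{\alpha_1}A_2\xrightarrow{\alpha_2}\cdots\xrightarrow{\alpha_{n-1}}A_n\xrightarrow{\alpha_n}\Sigma A_1$. Its left rotation is $A_2\xrightarrow{\alpha_2}\cdots\xrightarrow{\alpha_n}\Sigma A_1\xrightarrow{(-1)^n\Sigma\alpha_1}\Sigma A_2$. A morphism from $(A_\bullet,\alpha)$ to $(B_\bullet,\beta)$ is a tuple $(\varphi_1,\dots,\varphi_n)$, $\varphi_i:A_i\to B_i$, with $\beta_i\varphi_i=\varphi_{i+1}\alpha_i$ for $1\le i\le n-1$ and $\beta_n\varphi_n=(\Sigma\varphi_1)\alpha_n$; it is an isomorphism if all $\varphi_i$ are isomorphisms. Direct sums of sequences are taken termwise. $(\mathcal{C},\Sigma)$ is $n$-angulated if it is equipped with a collection $\mathscr N$ of $n$-$\Sigma$-sequences, called $n$-angles, such that: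 (N1)(a) $\mathscr N$ is closed under direct sums, direct summands and isomorphisms of $n$-$\Sigma$-sequences; (b) for every object $A$, the trivial sequence $A\xrightarrow{1}A\to0\to\cdots\to0\to\Sigma A$ is in $\mathscr N$; (c) every morphism $A_1\to A_2$ is the first morphism of some $n$-angle; (N2) an $n$-$\Sigma$-sequence is in $\mathscr N$ iff its left rotation is; (N3) given $n$-angles $(A_\bullet,\alpha),(B_\bullet,\beta)$ and $\varphi_1:A_1\to B_1$, $\varphi_2:A_2\to B_2$ with $\beta_1\varphi_1=\varphi_2\alpha_1$, there exist $\varphi_3,\dots,\varphi_n$ making $(\varphi_1,\dots,\varphi_n)$ a morphism; (N4) in (N3) the $\varphi_i$ can be chosen so that the mapping cone $A_2\oplus B_1\to A_3\oplus B_2\to\cdots\to\Sigma A_1\oplus B_n\to\Sigma A_2\oplus\Sigma B_1$, with maps $\left[\begin{smallmatrix}-\alpha_{i+1}&0\\ \varphi_{i+1}&\beta_i\end{smallmatrix}\right]$ ($1\le i\le n-1$) and last map $\left[\begin{smallmatrix}-\Sigma\alpha_1&0\\ \Sigma\varphi_1&\beta_n\end{smallmatrix}\right]$, is an $n$-angle. Grothendieck group: $F(\mathcal{C})$ is the free abelian group on isomorphism classes $\langle A\rangle$ of objects; for an $n$-angle $A_\bullet$, $\chi(A_\bullet)=\sum_{i=1}^n(-1)^{i+1}\langle A_i\rangle$; $R(\mathcal{C})$ is generated by all $\chi(A_\bullet)$, together with $\langle 0\rangle$ when $n$ is even; $K_0(\mathcal{C})=F(\mathcal{C})/R(\mathcal{C})$,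 $[A]$ the class of $\langle A\rangle$. An additive functor $L:\mathcal{C}\to\mathcal{C}'$ between $n$-angulated categories is $n$-angulated if there is a natural isomorphism $\eta:L\circ\Sigma\to\Sigma'\circ L$ such that $L$ sends each $n$-angle $(A_\bullet,\alpha)$ to the $n$-angle $L A_1\xrightarrow{L\alpha_1}\cdots\xrightarrow{L\alpha_{n-1}}LA_n\xrightarrow{\eta\circ L\alpha_n}\Sigma'LA_1$. An $n$-angulated subcategory of $(\mathcal{C},\Sigma)$ is a full subcategory $\mathcal{A}$, closed under isomorphisms, on which $\Sigma$ restricts to an automorphism, equipped with $n$-angles making $(\mathcal{A},\Sigma)$ $n$-angulated, such that the inclusion $\mathcal{A}\to\mathcal{C}$ is $n$-angulated. $\mathcal{A}$ is dense if every object of $\mathcal{C}$ is a direct summand of an object of $\mathcal{A}$; complete if whenever an $n$-angle $A_1\to\cdots\to A_n\to\Sigma A_1$ in $\mathcal{C}$ has $n-1$ of $A_1,\dots,A_n$ in $\mathcal{A}$, the remaining one is in $\mathcal{A}$. *)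

theory Defs
  imports "HOL-Algebra.Free_Abelian_Groups" "HOL-Algebra.Generated_Groups"
begin

text \<open>A small category given concretely: a set of objects, hom-sets, composition
  (cmp g f = g after f), identities, an addition on morphisms with zero morphisms
  (the preadditive structure), and a pair (object map, morphism map) for Sigma.\<close>

record ('o, 'm) catS =
  ob   :: "'o set"
  hom  :: "'o \<Rightarrow> 'o \<Rightarrow> 'm set"
  cmp  :: "'m \<Rightarrow> 'm \<Rightarrow> 'm"
  idm  :: "'o \<Rightarrow> 'm"
  madd :: "'m \<Rightarrow> 'm \<Rightarrow> 'm"
  mzero :: "'o \<Rightarrow> 'o \<Rightarrow> 'm"
  sO   :: "'o \<Rightarrow> 'o"
  sM   :: "'m \<Rightarrow> 'm"

definition category :: "('o, 'm) catS \<Rightarrow> bool" where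
  "category C \<longleftrightarrow>
     (\<forall>A B. (A \<notin> ob C \<or> B \<notin> ob C) \<longrightarrow> hom C A B = {}) \<and>
     (\<forall>A\<in>ob C. \<forall>B\<in>ob C. \<forall>A'\<in>ob C. \<forall>B'\<in>ob C. \<forall>f.
        f \<in> hom C A B \<longrightarrow> f \<in> hom C A' B' \<longrightarrow> A = A' \<and> B = B') \<and>
     (\<forall>A\<in>ob C. idm C A \<in> hom C A A) \<and>
     (\<forall>A B D f g. f \<in> hom C A B \<longrightarrow> g \<in> hom C B D \<longrightarrow> cmp C g f \<in> hom C A D) \<and>
     (\<forall>A B f. f \<in> hom C A B \<longrightarrow> cmp C (idm C B) f = f \<and> cmp C f (idm C A) = f) \<and>
     (\<forall>A B D E f g h. f \<in> hom C A B \<longrightarrow> g \<in> hom C B D \<longrightarrow> h \<in> hom C D E \<longrightarrow>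
        cmp C h (cmp C g f) = cmp C (cmp C h g) f)"

definition homgrp :: "('o, 'm) catS \<Rightarrow> 'o \<Rightarrow> 'o \<Rightarrow> 'm monoid" where
  "homgrp C A B = \<lparr>carrier = hom C A B, monoid.mult = madd C, one = mzero C A B\<rparr>"

definition preadditive :: "('o, 'm) catS \<Rightarrow> bool" where
  "preadditive C \<longleftrightarrow> category C \<and>
     (\<forall>A\<in>ob C. \<forall>B\<in>ob C. comm_group (homgrp C A B)) \<and>
     (\<forall>A B D f g h. f \<in> hom C A B \<longrightarrow> g \<in> hom C A B \<longrightarrow> h \<in> hom C B D \<longrightarrow>
        cmp C h (madd C f g) = madd C (cmp C h f) (cmp C h g)) \<and>
     (\<forall>A B D f g h. h \<in> hom C A B \<longrightarrow> f \<in> hom C B D \<longrightarrow> g \<in> hom C B D \<longrightarrow>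
        cmp C (madd C f g) h = madd C (cmp C f h) (cmp C g h))"

definition mneg :: "('o, 'm) catS \<Rightarrow> 'm \<Rightarrow> 'm" where
  "mneg C f = (SOME g. \<exists>A\<in>ob C. \<exists>B\<in>ob C. f \<in> hom C A B \<and> g \<in> hom C A B \<and>
                     madd C f g = mzero C A B)"

definition is_zero_obj :: "('o, 'm) catS \<Rightarrow> 'o \<Rightarrow> bool" where
  "is_zero_obj C Z \<longleftrightarrow> Z \<in> ob C \<and>
     (\<forall>A\<in>ob C. (\<exists>!f. f \<in> hom C Z A) \<and> (\<exists>!f. f \<in> hom C A Z))"

definition biprod :: "('o, 'm) catS \<Rightarrow> 'o \<Rightarrow> 'o \<Rightarrow> 'o \<Rightarrow> 'm \<Rightarrow> 'm \<Rightarrow> 'm \<Rightarrow> 'm \<Rightarrow> bool" where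
  "biprod C A B S i1 i2 p1 p2 \<longleftrightarrow> A \<in> ob C \<and> B \<in> ob C \<and> S \<in> ob C \<and>
     i1 \<in> hom C A S \<and> i2 \<in> hom C B S \<and> p1 \<in> hom C S A \<and> p2 \<in> hom C S B \<and>
     cmp C p1 i1 = idm C A \<and> cmp C p2 i2 = idm C B \<and>
     cmp C p1 i2 = mzero C B A \<and> cmp C p2 i1 = mzero C A B \<and>
     madd C (cmp C i1 p1) (cmp C i2 p2) = idm C S"

definition additive :: "('o, 'm) catS \<Rightarrow> bool" where
  "additive C \<longleftrightarrow> preadditive C \<and> (\<exists>Z. is_zero_obj C Z) \<and>
     (\<forall>A\<in>ob C. \<forall>B\<in>ob C. \<exists>S i1 i2 p1 p2. biprod C A B S i1 i2 p1 p2)"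

definition is_iso :: "('o, 'm) catS \<Rightarrow> 'o \<Rightarrow> 'o \<Rightarrow> 'm \<Rightarrow> bool" where
  "is_iso C A B f \<longleftrightarrow> f \<in> hom C A B \<and>
     (\<exists>g\<in>hom C B A. cmp C g f = idm C A \<and> cmp C f g = idm C B)"

definition isomorphic :: "('o, 'm) catS \<Rightarrow> 'o \<Rightarrow> 'o \<Rightarrow> bool" where
  "isomorphic C A B \<longleftrightarrow> (\<exists>f. is_iso C A B f)"

definition sigma_auto :: "('o, 'm) catS \<Rightarrow> bool" where
  "sigma_auto C \<longleftrightarrow>
     bij_betw (sO C) (ob C) (ob C) \<and>
     (\<forall>A\<in>ob C. \<forall>B\<in>ob C. bij_betw (sM C) (hom C A B) (hom C (sO C A) (sO C B))) \<and>
     (\<forall>A\<in>ob C. sM C (idm C A) = idm C (sO C A)) \<and>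
     (\<forall>A B D f g. f \<in> hom C A B \<longrightarrow> g \<in> hom C B D \<longrightarrow>
        sM C (cmp C g f) = cmp C (sM C g) (sM C f))"

text \<open>An n-Sigma-sequence is a pair (A, alpha) of functions on indices 1..n
  (values outside 1..n are irrelevant).\<close>
type_synonym ('o, 'm) nseq = "(nat \<Rightarrow> 'o) \<times> (nat \<Rightarrow> 'm)"

definition is_nseq :: "('o, 'm) catS \<Rightarrow> nat \<Rightarrow> ('o, 'm) nseq \<Rightarrow> bool" where
  "is_nseq C n X \<longleftrightarrow> (case X of (A, \<alpha>) \<Rightarrow>
     (\<forall>i\<in>{1..n}. A i \<in> ob C) \<and>
     (\<forall>i\<in>{1..<n}. \<alpha> i \<in> hom C (A i) (A (Suc i))) \<and>
     \<alpha> n \<in> hom C (A n) (sO C (A 1)))"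

definition lrot :: "('o, 'm) catS \<Rightarrow> nat \<Rightarrow> ('o, 'm) nseq \<Rightarrow> ('o, 'm) nseq" where
  "lrot C n X = (case X of (A, \<alpha>) \<Rightarrow>
     (\<lambda>i. if i < n then A (Suc i) else sO C (A 1),
      \<lambda>i. if i < n then \<alpha> (Suc i)
           else if even n then sM C (\<alpha> 1) else mneg C (sM C (\<alpha> 1))))"

definition seq_mor :: "('o, 'm) catS \<Rightarrow> nat \<Rightarrow> ('o, 'm) nseq \<Rightarrow> ('o, 'm) nseq \<Rightarrow> (nat \<Rightarrow> 'm) \<Rightarrow> bool" where
  "seq_mor C n X Y \<phi> \<longleftrightarrow> (case X of (A, \<alpha>) \<Rightarrow> case Y of (B, \<beta>) \<Rightarrow>
     (\<forall>i\<in>{1..n}. \<phi> i \<in> hom C (A i) (B i)) \<and>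
     (\<forall>i\<in>{1..<n}. cmp C (\<beta> i) (\<phi> i) = cmp C (\<phi> (Suc i)) (\<alpha> i)) \<and>
     cmp C (\<beta> n) (\<phi> n) = cmp C (sM C (\<phi> 1)) (\<alpha> n))"

definition seq_iso :: "('o, 'm) catS \<Rightarrow> nat \<Rightarrow> ('o, 'm) nseq \<Rightarrow> ('o, 'm) nseq \<Rightarrow> bool" where
  "seq_iso C n X Y \<longleftrightarrow> (\<exists>\<phi>. seq_mor C n X Y \<phi> \<and>
     (\<forall>i\<in>{1..n}. is_iso C (fst X i) (fst Y i) (\<phi> i)))"

definition is_dsum :: "('o, 'm) catS \<Rightarrow> nat \<Rightarrow> ('o, 'm) nseq \<Rightarrow> ('o, 'm) nseq \<Rightarrow> ('o, 'm) nseq \<Rightarrow> bool" where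
  "is_dsum C n X Y S \<longleftrightarrow> (case X of (A, \<alpha>) \<Rightarrow> case Y of (B, \<beta>) \<Rightarrow> case S of (D, \<sigma>) \<Rightarrow>
     (\<exists>i1 i2 p1 p2 :: nat \<Rightarrow> 'm.
        (\<forall>i\<in>{1..n}. biprod C (A i) (B i) (D i) (i1 i) (i2 i) (p1 i) (p2 i)) \<and>
        (\<forall>i\<in>{1..<n}. \<sigma> i = madd C (cmp C (i1 (Suc i)) (cmp C (\<alpha> i) (p1 i)))
                                    (cmp C (i2 (Suc i)) (cmp C (\<beta> i) (p2 i)))) \<and>
        \<sigma> n = madd C (cmp C (sM C (i1 1)) (cmp C (\<alpha> n) (p1 n)))
                     (cmp C (sM C (i2 1)) (cmp C (\<beta> n) (p2 n)))))"

text \<open>Q is a mapping cone of the morphism phi : X \<rightarrow> Y (objects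
  A_(i+1) + B_i for i < n, Sigma A_1 + B_n, with the matrix maps of (N4);
  the last target is Sigma applied to the first biproduct).\<close>
definition is_cone :: "('o, 'm) catS \<Rightarrow> nat \<Rightarrow> ('o, 'm) nseq \<Rightarrow> ('o, 'm) nseq \<Rightarrow> (nat \<Rightarrow> 'm)
                       \<Rightarrow> ('o, 'm) nseq \<Rightarrow> bool" where
  "is_cone C n X Y \<phi> Q \<longleftrightarrow> (case X of (A, \<alpha>) \<Rightarrow> case Y of (B, \<beta>) \<Rightarrow> case Q of (D, \<gamma>) \<Rightarrow>
     (\<exists>i1 i2 p1 p2 :: nat \<Rightarrow> 'm.
        (\<forall>i\<in>{1..n}. biprod C (if i < n then A (Suc i) else sO C (A 1)) (B i) (D i)
                         (i1 i) (i2 i) (p1 i) (p2 i)) \<and>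
        (\<forall>i\<in>{1..<n}. \<gamma> i =
            madd C (madd C (cmp C (i1 (Suc i)) (cmp C (mneg C (\<alpha> (Suc i))) (p1 i)))
                           (cmp C (i2 (Suc i)) (cmp C (\<phi> (Suc i)) (p1 i))))
                   (cmp C (i2 (Suc i)) (cmp C (\<beta> i) (p2 i)))) \<and>
        \<gamma> n = madd C (madd C (cmp C (sM C (i1 1)) (cmp C (mneg C (sM C (\<alpha> 1))) (p1 n)))
                             (cmp C (sM C (i2 1)) (cmp C (sM C (\<phi> 1)) (p1 n))))
                     (cmp C (sM C (i2 1)) (cmp C (\<beta> n) (p2 n)))))"

definition nangulated :: "('o, 'm) catS \<Rightarrow> nat \<Rightarrow> ('o, 'm) nseq set \<Rightarrow> bool" where
  "nangulated C n N \<longleftrightarrow> additive C \<and> sigma_auto C \<and>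
     (\<forall>X\<in>N. is_nseq C n X) \<and>
     \<comment> \<open>(N1)(a)\<close>
     (\<forall>X\<in>N. \<forall>Y\<in>N. \<forall>S. is_nseq C n S \<longrightarrow> is_dsum C n X Y S \<longrightarrow> S \<in> N) \<and>
     (\<forall>S\<in>N. \<forall>X Y. is_nseq C n X \<longrightarrow> is_nseq C n Y \<longrightarrow> is_dsum C n X Y S \<longrightarrow> X \<in> N) \<and>
     (\<forall>X\<in>N. \<forall>Y. is_nseq C n Y \<longrightarrow> seq_iso C n X Y \<longrightarrow> Y \<in> N) \<and>
     \<comment> \<open>(N1)(b)\<close>
     (\<forall>A\<in>ob C. \<forall>Z. is_zero_obj C Z \<longrightarrow>
        ((\<lambda>i. if i = 1 \<or> i = 2 then A else Z),
         (\<lambda>i. if i = 1 then idm C A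
              else if i = 2 then mzero C A Z
              else if i < n then mzero C Z Z else mzero C Z (sO C A))) \<in> N) \<and>
     \<comment> \<open>(N1)(c)\<close>
     (\<forall>A1\<in>ob C. \<forall>A2\<in>ob C. \<forall>f\<in>hom C A1 A2.
        \<exists>X\<in>N. fst X 1 = A1 \<and> fst X 2 = A2 \<and> snd X 1 = f) \<and>
     \<comment> \<open>(N2)\<close>
     (\<forall>X. is_nseq C n X \<longrightarrow> (X \<in> N \<longleftrightarrow> lrot C n X \<in> N)) \<and>
     \<comment> \<open>(N3)\<close>
     (\<forall>X\<in>N. \<forall>Y\<in>N. \<forall>f1 f2.
        f1 \<in> hom C (fst X 1) (fst Y 1) \<longrightarrow> f2 \<in> hom C (fst X 2) (fst Y 2) \<longrightarrow>
        cmp C (snd Y 1) f1 = cmp C f2 (snd X 1) \<longrightarrow>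
        (\<exists>\<phi>. \<phi> 1 = f1 \<and> \<phi> 2 = f2 \<and> seq_mor C n X Y \<phi>)) \<and>
     \<comment> \<open>(N4)\<close>
     (\<forall>X\<in>N. \<forall>Y\<in>N. \<forall>f1 f2.
        f1 \<in> hom C (fst X 1) (fst Y 1) \<longrightarrow> f2 \<in> hom C (fst X 2) (fst Y 2) \<longrightarrow>
        cmp C (snd Y 1) f1 = cmp C f2 (snd X 1) \<longrightarrow>
        (\<exists>\<phi> Q. \<phi> 1 = f1 \<and> \<phi> 2 = f2 \<and> seq_mor C n X Y \<phi> \<and> is_cone C n X Y \<phi> Q \<and> Q \<in> N))"

definition isocls :: "('o, 'm) catS \<Rightarrow> 'o \<Rightarrow> 'o set" where
  "isocls C A = {B \<in> ob C. isomorphic C A B}"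

definition Fgrp :: "('o, 'm) catS \<Rightarrow> ('o set \<Rightarrow>\<^sub>0 int) monoid" where
  "Fgrp C = free_Abelian_group (isocls C ` ob C)"

definition gen :: "('o, 'm) catS \<Rightarrow> 'o \<Rightarrow> ('o set \<Rightarrow>\<^sub>0 int)" where
  "gen C A = Poly_Mapping.single (isocls C A) 1"

definition chi :: "('o, 'm) catS \<Rightarrow> nat \<Rightarrow> ('o, 'm) nseq \<Rightarrow> ('o set \<Rightarrow>\<^sub>0 int)" where
  "chi C n X = (\<Sum>i\<in>{1..n}. Poly_Mapping.single (isocls C (fst X i)) ((-1) ^ (i + 1)))"

definition Rgrp :: "('o, 'm) catS \<Rightarrow> nat \<Rightarrow> ('o, 'm) nseq set \<Rightarrow> ('o set \<Rightarrow>\<^sub>0 int) set" where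
  "Rgrp C n N = generate (Fgrp C)
     (chi C n ` N \<union> (if even n then {gen C Z | Z. is_zero_obj C Z} else {}))"

definition K0 :: "('o, 'm) catS \<Rightarrow> nat \<Rightarrow> ('o, 'm) nseq set \<Rightarrow> ('o set \<Rightarrow>\<^sub>0 int) set monoid" where
  "K0 C n N = Fgrp C Mod Rgrp C n N"

definition K0cls :: "('o, 'm) catS \<Rightarrow> nat \<Rightarrow> ('o, 'm) nseq set \<Rightarrow> 'o \<Rightarrow> ('o set \<Rightarrow>\<^sub>0 int) set" where
  "K0cls C n N A = Rgrp C n N #>\<^bsub>Fgrp C\<^esub> gen C A"

definition nang_functor :: "('o1, 'm1) catS \<Rightarrow> ('o2, 'm2) catS \<Rightarrow> nat \<Rightarrow>
    ('o1, 'm1) nseq set \<Rightarrow> ('o2, 'm2) nseq set \<Rightarrow> ('o1 \<Rightarrow> 'o2) \<Rightarrow> ('m1 \<Rightarrow> 'm2) \<Rightarrow> bool" where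
  "nang_functor D C n ND NC LO LM \<longleftrightarrow>
     (\<forall>A\<in>ob D. LO A \<in> ob C) \<and>
     (\<forall>A B f. f \<in> hom D A B \<longrightarrow> LM f \<in> hom C (LO A) (LO B)) \<and>
     (\<forall>A\<in>ob D. LM (idm D A) = idm C (LO A)) \<and>
     (\<forall>A B E f g. f \<in> hom D A B \<longrightarrow> g \<in> hom D B E \<longrightarrow> LM (cmp D g f) = cmp C (LM g) (LM f)) \<and>
     (\<forall>A B f g. f \<in> hom D A B \<longrightarrow> g \<in> hom D A B \<longrightarrow> LM (madd D f g) = madd C (LM f) (LM g)) \<and>
     (\<exists>\<eta>. (\<forall>A\<in>ob D. is_iso C (LO (sO D A)) (sO C (LO A)) (\<eta> A)) \<and>
          (\<forall>A B f. f \<in> hom D A B \<longrightarrow>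
              cmp C (\<eta> B) (LM (sM D f)) = cmp C (sM C (LM f)) (\<eta> A)) \<and>
          (\<forall>X\<in>ND. (LO \<circ> fst X,
                    \<lambda>i. if i = n then cmp C (\<eta> (fst X 1)) (LM (snd X n)) else LM (snd X i)) \<in> NC))"

definition fullsub :: "('o, 'm) catS \<Rightarrow> 'o set \<Rightarrow> ('o, 'm) catS" where
  "fullsub C S = C\<lparr>ob := S, hom := (\<lambda>A B. if A \<in> S \<and> B \<in> S then hom C A B else {})\<rparr>"

definition nang_subcat :: "('o, 'm) catS \<Rightarrow> nat \<Rightarrow> ('o, 'm) nseq set \<Rightarrow> 'o set \<Rightarrow> ('o, 'm) nseq set \<Rightarrow> bool" where
  "nang_subcat C n N S NS \<longleftrightarrow>
     S \<subseteq> ob C \<and>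
     (\<forall>A\<in>S. \<forall>B\<in>ob C. isomorphic C A B \<longrightarrow> B \<in> S) \<and>
     nangulated (fullsub C S) n NS \<and>
     nang_functor (fullsub C S) C n NS N id id"

definition dense_sub :: "('o, 'm) catS \<Rightarrow> 'o set \<Rightarrow> bool" where
  "dense_sub C S \<longleftrightarrow> (\<forall>X\<in>ob C. \<exists>B\<in>S. \<exists>Y i1 i2 p1 p2. biprod C X Y B i1 i2 p1 p2)"

definition complete_sub :: "('o, 'm) catS \<Rightarrow> nat \<Rightarrow> ('o, 'm) nseq set \<Rightarrow> 'o set \<Rightarrow> bool" where
  "complete_sub C n N S \<longleftrightarrow>
     (\<forall>X\<in>N. \<forall>j\<in>{1..n}. (\<forall>i\<in>{1..n} - {j}. fst X i \<in> S) \<longrightarrow> fst X j \<in> S)"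

end

theory Submission
  imports Defs
begin

text \<open>Let G be the preimage of H in the free abelian group on isomorphism classes, so that
  A_H consists of the objects whose generator lies in G, and G contains the relations R.
  Because n is odd, three kinds of n-angles yield relations: the trivial angle of a zero object
  gives [0] = 0, the rotated trivial angle of A gives [A] + [\<Sigma>A] = 0, and a direct sum of two
  shifted trivial angles gives [A \<oplus> B] = [A] + [B]. Hence A_H is closed under \<Sigma>, \<Sigma>\<inverse>,
  isomorphisms and direct sums and contains A \<oplus> \<Sigma>A for every A, which is density; the
  Euler characteristic of an n-angle gives completeness. All axioms of an n-angulated category
  then restrict to A_H except (N1)(c): a morphism of A_H is first completed to an n-angle in C,
  whose objects A_k for 3 \<le> k < n are made to have class 0 by adding the trivial angle of \<Sigma>A_k
  in degrees k, k + 1; the last object then lies in A_H by completeness.\<close>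

section \<open>Preadditive categories with a shift\<close>

lemma homgrp_simps [simp]:
  "carrier (homgrp C A B) = hom C A B" "monoid.mult (homgrp C A B) = madd C"
  "one (homgrp C A B) = mzero C A B"
  by (simp_all add: homgrp_def)

locale preadditive_category =
  fixes C :: "('o, 'm) catS"
  assumes preadditive: "preadditive C"
begin

lemma category: "category C"
  using preadditive by (simp add: preadditive_def)

lemma hom_obD: "f \<in> hom C A B \<Longrightarrow> A \<in> ob C \<and> B \<in> ob C"
  using category unfolding category_def by (metis empty_iff)

lemma hom_unique: "f \<in> hom C A B \<Longrightarrow> f \<in> hom C A' B' \<Longrightarrow> A = A' \<and> B = B'"
  using category hom_obD unfolding category_def by meson

lemma idm_hom: "A \<in> ob C \<Longrightarrow> idm C A \<in> hom C A A"
  using category unfolding category_def by blast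

lemma cmp_hom: "f \<in> hom C A B \<Longrightarrow> g \<in> hom C B D \<Longrightarrow> cmp C g f \<in> hom C A D"
  using category unfolding category_def by blast

lemma cmp_idm_left: "f \<in> hom C A B \<Longrightarrow> cmp C (idm C B) f = f"
  using category unfolding category_def by blast

lemma cmp_idm_right: "f \<in> hom C A B \<Longrightarrow> cmp C f (idm C A) = f"
  using category unfolding category_def by blast

lemma cmp_assoc:
  "f \<in> hom C A B \<Longrightarrow> g \<in> hom C B D \<Longrightarrow> h \<in> hom C D E \<Longrightarrow>
     cmp C h (cmp C g f) = cmp C (cmp C h g) f"
  using category unfolding category_def by blast

lemma cmp_madd_distrib_right:
  "h \<in> hom C A B \<Longrightarrow> f \<in> hom C B D \<Longrightarrow> g \<in> hom C B D \<Longrightarrow>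
     cmp C (madd C f g) h = madd C (cmp C f h) (cmp C g h)"
  using preadditive unfolding preadditive_def by blast

lemma hom_group: "f \<in> hom C A B \<Longrightarrow> group (homgrp C A B)"
  using preadditive hom_obD unfolding preadditive_def comm_group_def by blast

lemma mzero_hom: "A \<in> ob C \<Longrightarrow> B \<in> ob C \<Longrightarrow> mzero C A B \<in> hom C A B"
  using preadditive unfolding preadditive_def comm_group_def
  by (metis group.is_monoid homgrp_simps(1,3) monoid.one_closed)

lemma madd_hom: "f \<in> hom C A B \<Longrightarrow> g \<in> hom C A B \<Longrightarrow> madd C f g \<in> hom C A B"
  using monoid.m_closed[OF group.is_monoid[OF hom_group]] by fastforce

lemma madd_mzero_right: "f \<in> hom C A B \<Longrightarrow> madd C f (mzero C A B) = f"
  using monoid.r_one[OF group.is_monoid[OF hom_group]] by fastforce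

lemma madd_mzero_left: "f \<in> hom C A B \<Longrightarrow> madd C (mzero C A B) f = f"
  using monoid.l_one[OF group.is_monoid[OF hom_group]] by fastforce

lemma madd_self_eq_mzero:
  assumes "f \<in> hom C A B" and "madd C f f = f" shows "f = mzero C A B"
  using group.l_cancel_one[OF hom_group[OF assms(1)], of f f] assms by simp

lemma mneg_hom: assumes f: "f \<in> hom C A B" shows "mneg C f \<in> hom C A B"
proof -
  have "\<exists>g. g \<in> hom C A B \<and> madd C f g = mzero C A B"
    using group.r_inv[OF hom_group] group.inv_closed[OF hom_group] f by fastforce
  then have "\<exists>g. \<exists>A'\<in>ob C. \<exists>B'\<in>ob C. f \<in> hom C A' B' \<and> g \<in> hom C A' B' \<and> madd C f g = mzero C A' B'"
    using f hom_obD by blast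
  then have "\<exists>A'\<in>ob C. \<exists>B'\<in>ob C. f \<in> hom C A' B' \<and> mneg C f \<in> hom C A' B' \<and>
               madd C f (mneg C f) = mzero C A' B'"
    unfolding mneg_def by (rule someI_ex)
  then show ?thesis
    using hom_unique[OF f] by blast
qed

lemma zero_obj_hom_eq:
  "f \<in> hom C A B \<Longrightarrow> g \<in> hom C A B \<Longrightarrow> is_zero_obj C A \<or> is_zero_obj C B \<Longrightarrow> f = g"
  unfolding is_zero_obj_def using hom_obD by blast

lemma cmp_through_zero_obj:
  assumes Z: "is_zero_obj C Z" and f: "f \<in> hom C A Z" and g: "g \<in> hom C Z B"
  shows "cmp C g f = mzero C A B"
proof -
  have "g = mzero C Z B"
    using zero_obj_hom_eq[OF g mzero_hom] Z hom_obD[OF g] by blast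
  then have "madd C g g = g"
    using madd_mzero_right g by simp
  then have "madd C (cmp C g f) (cmp C g f) = cmp C g f"
    using cmp_madd_distrib_right[OF f g g] by simp
  then show ?thesis
    using madd_self_eq_mzero[OF cmp_hom[OF f g]] by simp
qed

lemma idm_iso: "A \<in> ob C \<Longrightarrow> is_iso C A A (idm C A)"
  unfolding is_iso_def using idm_hom cmp_idm_left by blast

lemma zero_obj_iso:
  assumes Z: "is_zero_obj C Z" and Z': "is_zero_obj C Z'"
  shows "is_iso C Z Z' (mzero C Z Z')"
proof -
  have ob: "Z \<in> ob C" "Z' \<in> ob C"
    using Z Z' unfolding is_zero_obj_def by blast+
  have f: "mzero C Z Z' \<in> hom C Z Z'" and g: "mzero C Z' Z \<in> hom C Z' Z"
    using mzero_hom ob by auto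
  have "cmp C (mzero C Z' Z) (mzero C Z Z') = idm C Z"
    using zero_obj_hom_eq[OF cmp_hom[OF f g] idm_hom] Z ob by blast
  moreover have "cmp C (mzero C Z Z') (mzero C Z' Z) = idm C Z'"
    using zero_obj_hom_eq[OF cmp_hom[OF g f] idm_hom] Z' ob by blast
  ultimately show ?thesis
    unfolding is_iso_def using f g by blast
qed

lemma isomorphic_sym: "isomorphic C A B \<Longrightarrow> isomorphic C B A"
  unfolding isomorphic_def is_iso_def by blast

lemma isomorphic_trans:
  assumes "isomorphic C A B" and "isomorphic C B D" shows "isomorphic C A D"
proof -
  obtain f g where f: "f \<in> hom C A B" "g \<in> hom C B A" "cmp C g f = idm C A" "cmp C f g = idm C B"
    using assms(1) unfolding isomorphic_def is_iso_def by blast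
  obtain f' g' where f': "f' \<in> hom C B D" "g' \<in> hom C D B" "cmp C g' f' = idm C B" "cmp C f' g' = idm C D"
    using assms(2) unfolding isomorphic_def is_iso_def by blast
  have "cmp C (cmp C g g') (cmp C f' f) = cmp C g (cmp C (cmp C g' f') f)"
    using cmp_assoc[OF cmp_hom[OF f(1) f'(1)] f'(2) f(2)] cmp_assoc[OF f(1) f'(1) f'(2)] by simp
  also have "\<dots> = idm C A"
    using f f' cmp_idm_left[OF f(1)] by simp
  finally have left: "cmp C (cmp C g g') (cmp C f' f) = idm C A" .
  have "cmp C (cmp C f' f) (cmp C g g') = cmp C f' (cmp C (cmp C f g) g')"
    using cmp_assoc[OF cmp_hom[OF f'(2) f(2)] f(1) f'(1)] cmp_assoc[OF f'(2) f(2) f(1)] by simp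
  also have "\<dots> = idm C D"
    using f f' cmp_idm_left[OF f'(2)] by simp
  finally have right: "cmp C (cmp C f' f) (cmp C g g') = idm C D" .
  show ?thesis
    unfolding isomorphic_def is_iso_def using cmp_hom[OF f(1) f'(1)] cmp_hom[OF f'(2) f(2)] left right by blast
qed

lemma biprod_zero_right:
  assumes A: "A \<in> ob C" and Z: "is_zero_obj C Z"
  shows "biprod C A Z A (idm C A) (mzero C Z A) (idm C A) (mzero C A Z)"
proof -
  have Zo: "Z \<in> ob C"
    using Z unfolding is_zero_obj_def by blast
  have h: "idm C A \<in> hom C A A" "mzero C Z A \<in> hom C Z A" "mzero C A Z \<in> hom C A Z"
    using idm_hom mzero_hom A Zo by auto
  have "cmp C (mzero C A Z) (mzero C Z A) = idm C Z"
    using zero_obj_hom_eq[OF cmp_hom[OF h(2) h(3)] idm_hom[OF Zo]] Z by blast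
  then show ?thesis
    unfolding biprod_def
    using A Zo h cmp_through_zero_obj[OF Z h(3) h(2)] cmp_idm_left[OF h(1)] cmp_idm_left[OF h(2)]
      cmp_idm_right[OF h(3)] madd_mzero_right[OF h(1)] by simp
qed

lemma biprod_zero_left:
  assumes B: "B \<in> ob C" and Z: "is_zero_obj C Z"
  shows "biprod C Z B B (mzero C Z B) (idm C B) (mzero C B Z) (idm C B)"
proof -
  have Zo: "Z \<in> ob C"
    using Z unfolding is_zero_obj_def by blast
  have h: "idm C B \<in> hom C B B" "mzero C Z B \<in> hom C Z B" "mzero C B Z \<in> hom C B Z"
    using idm_hom mzero_hom B Zo by auto
  have "cmp C (mzero C B Z) (mzero C Z B) = idm C Z"
    using zero_obj_hom_eq[OF cmp_hom[OF h(2) h(3)] idm_hom[OF Zo]] Z by blast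
  then show ?thesis
    unfolding biprod_def
    using B Zo h cmp_through_zero_obj[OF Z h(3) h(2)] cmp_idm_left[OF h(1)] cmp_idm_left[OF h(2)]
      cmp_idm_right[OF h(3)] madd_mzero_left[OF h(1)] by simp
qed

lemma zero_obj_retract:
  assumes Z': "is_zero_obj C Z'" and Z: "Z \<in> ob C"
    and u: "u \<in> hom C Z Z'" and v: "v \<in> hom C Z' Z" and vu: "cmp C v u = idm C Z"
  shows "is_zero_obj C Z"
  unfolding is_zero_obj_def
proof (intro conjI ballI Z)
  fix A assume A: "A \<in> ob C"
  obtain g where g: "g \<in> hom C Z' A"
    using Z' A unfolding is_zero_obj_def by blast
  show "\<exists>!f. f \<in> hom C Z A"
  proof (rule ex1I[of _ "cmp C g u"])
    fix f assume f: "f \<in> hom C Z A"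
    have "f = cmp C (cmp C f v) u"
      using vu cmp_idm_right[OF f] cmp_assoc[OF u v f] by simp
    also have "cmp C f v = g"
      using zero_obj_hom_eq[OF cmp_hom[OF v f] g] Z' by blast
    finally show "f = cmp C g u" .
  qed (rule cmp_hom[OF u g])
  obtain h where h: "h \<in> hom C A Z'"
    using Z' A unfolding is_zero_obj_def by blast
  show "\<exists>!f. f \<in> hom C A Z"
  proof (rule ex1I[of _ "cmp C v h"])
    fix f assume f: "f \<in> hom C A Z"
    have "f = cmp C v (cmp C u f)"
      using vu cmp_idm_left[OF f] cmp_assoc[OF f u v] by simp
    also have "cmp C u f = h"
      using zero_obj_hom_eq[OF cmp_hom[OF f u] h] Z' by blast
    finally show "f = cmp C v h" .
  qed (rule cmp_hom[OF h v])
qed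

end

locale additive_sigma_category = preadditive_category C for C :: "('o, 'm) catS" +
  assumes additive: "additive C" and sigma: "sigma_auto C"
begin

definition zero_obj :: 'o where
  "zero_obj = (SOME Z. is_zero_obj C Z)"

lemma is_zero_obj_zero_obj: "is_zero_obj C zero_obj"
  unfolding zero_obj_def using additive unfolding additive_def by (metis someI_ex)

lemma zero_obj_ob: "zero_obj \<in> ob C"
  using is_zero_obj_zero_obj unfolding is_zero_obj_def by blast

lemma biprod_exists: "A \<in> ob C \<Longrightarrow> B \<in> ob C \<Longrightarrow> \<exists>D i1 i2 p1 p2. biprod C A B D i1 i2 p1 p2"
  using additive unfolding additive_def by blast

lemma biprod_ob: "biprod C A B D i1 i2 p1 p2 \<Longrightarrow> D \<in> ob C"
  unfolding biprod_def by blast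

lemma sO_bij: "bij_betw (sO C) (ob C) (ob C)"
  using sigma unfolding sigma_auto_def by blast

lemma sO_ob: "A \<in> ob C \<Longrightarrow> sO C A \<in> ob C"
  using bij_betw_apply[OF sO_bij] .

lemma sO_surj: "B \<in> ob C \<Longrightarrow> \<exists>A\<in>ob C. B = sO C A"
  using bij_betw_imp_surj_on[OF sO_bij] by blast

lemma sM_bij: "A \<in> ob C \<Longrightarrow> B \<in> ob C \<Longrightarrow> bij_betw (sM C) (hom C A B) (hom C (sO C A) (sO C B))"
  using sigma unfolding sigma_auto_def by blast

lemma sM_idm: "A \<in> ob C \<Longrightarrow> sM C (idm C A) = idm C (sO C A)"
  using sigma unfolding sigma_auto_def by blast

lemma sM_cmp: "f \<in> hom C A B \<Longrightarrow> g \<in> hom C B D \<Longrightarrow> sM C (cmp C g f) = cmp C (sM C g) (sM C f)"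
  using sigma unfolding sigma_auto_def by blast

lemma sM_hom: "f \<in> hom C A B \<Longrightarrow> sM C f \<in> hom C (sO C A) (sO C B)"
  using bij_betw_apply[OF sM_bij] hom_obD by blast

lemma zero_obj_sO: assumes Z: "is_zero_obj C Z" shows "is_zero_obj C (sO C Z)"
proof -
  have Zo: "Z \<in> ob C"
    using Z unfolding is_zero_obj_def by blast
  have singleton: "\<exists>!y. y \<in> Y" if "bij_betw h X Y" "\<exists>!x. x \<in> X" for h :: "'m \<Rightarrow> 'm" and X Y
    using that unfolding bij_betw_def inj_on_def by blast
  show ?thesis
    unfolding is_zero_obj_def
  proof (intro conjI ballI)
    fix B assume "B \<in> ob C"
    then obtain A where A: "A \<in> ob C" "B = sO C A"
      using sO_surj by blast
    show "\<exists>!f. f \<in> hom C (sO C Z) B"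
      using singleton[OF sM_bij[OF Zo A(1)]] Z A unfolding is_zero_obj_def by blast
    show "\<exists>!f. f \<in> hom C B (sO C Z)"
      using singleton[OF sM_bij[OF A(1) Zo]] Z A unfolding is_zero_obj_def by blast
  qed (rule sO_ob[OF Zo])
qed

end

section \<open>n-angulated categories\<close>

lemma is_nseq_Pair:
  "is_nseq C n (A, \<alpha>) \<longleftrightarrow> (\<forall>i\<in>{1..n}. A i \<in> ob C) \<and>
     (\<forall>i\<in>{1..<n}. \<alpha> i \<in> hom C (A i) (A (Suc i))) \<and> \<alpha> n \<in> hom C (A n) (sO C (A 1))"
  unfolding is_nseq_def by simp

locale nangulated_category =
  fixes C :: "('o, 'm) catS" and n :: nat and N :: "('o, 'm) nseq set"
  assumes n_ge_3: "3 \<le> n" and nangulated: "nangulated C n N"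

sublocale nangulated_category \<subseteq> additive_sigma_category C
  using nangulated unfolding nangulated_def additive_def
  by unfold_locales (simp_all add: additive_def)

context nangulated_category
begin

lemma angle_nseq: "X \<in> N \<Longrightarrow> is_nseq C n X"
  using nangulated unfolding nangulated_def by (elim conjE) blast

lemma angle_dsum: "X \<in> N \<Longrightarrow> Y \<in> N \<Longrightarrow> is_nseq C n S \<Longrightarrow> is_dsum C n X Y S \<Longrightarrow> S \<in> N"
  using nangulated unfolding nangulated_def by (elim conjE) blast

lemma angle_dsum_summand:
  "S \<in> N \<Longrightarrow> is_nseq C n X \<Longrightarrow> is_nseq C n Y \<Longrightarrow> is_dsum C n X Y S \<Longrightarrow> X \<in> N"
  using nangulated unfolding nangulated_def by (elim conjE) blast

lemma angle_seq_iso: "X \<in> N \<Longrightarrow> is_nseq C n Y \<Longrightarrow> seq_iso C n X Y \<Longrightarrow> Y \<in> N"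
  using nangulated unfolding nangulated_def by (elim conjE) blast

lemma trivial_angle:
  "A \<in> ob C \<Longrightarrow> is_zero_obj C Z \<Longrightarrow>
     ((\<lambda>i. if i = 1 \<or> i = 2 then A else Z),
      (\<lambda>i. if i = 1 then idm C A else if i = 2 then mzero C A Z
           else if i < n then mzero C Z Z else mzero C Z (sO C A))) \<in> N"
  using nangulated unfolding nangulated_def by (elim conjE) blast

lemma angle_exists:
  "f \<in> hom C A1 A2 \<Longrightarrow> \<exists>X\<in>N. fst X 1 = A1 \<and> fst X 2 = A2 \<and> snd X 1 = f"
  using nangulated hom_obD unfolding nangulated_def by (elim conjE) blast

lemma angle_lrot_iff: "is_nseq C n X \<Longrightarrow> X \<in> N \<longleftrightarrow> lrot C n X \<in> N"
  using nangulated unfolding nangulated_def by (elim conjE) blast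

lemma angle_morphism_exists:
  "X \<in> N \<Longrightarrow> Y \<in> N \<Longrightarrow> f1 \<in> hom C (fst X 1) (fst Y 1) \<Longrightarrow> f2 \<in> hom C (fst X 2) (fst Y 2) \<Longrightarrow>
     cmp C (snd Y 1) f1 = cmp C f2 (snd X 1) \<Longrightarrow> \<exists>\<phi>. \<phi> 1 = f1 \<and> \<phi> 2 = f2 \<and> seq_mor C n X Y \<phi>"
  using nangulated unfolding nangulated_def by (elim conjE) blast

lemma angle_cone_exists:
  "X \<in> N \<Longrightarrow> Y \<in> N \<Longrightarrow> f1 \<in> hom C (fst X 1) (fst Y 1) \<Longrightarrow> f2 \<in> hom C (fst X 2) (fst Y 2) \<Longrightarrow>
     cmp C (snd Y 1) f1 = cmp C f2 (snd X 1) \<Longrightarrow>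
     \<exists>\<phi> Q. \<phi> 1 = f1 \<and> \<phi> 2 = f2 \<and> seq_mor C n X Y \<phi> \<and> is_cone C n X Y \<phi> Q \<and> Q \<in> N"
  using nangulated unfolding nangulated_def by (elim conjE) meson

lemma angle_ob: "(A, \<alpha>) \<in> N \<Longrightarrow> i \<in> {1..n} \<Longrightarrow> A i \<in> ob C"
  using angle_nseq[of "(A, \<alpha>)"] unfolding is_nseq_Pair by blast

lemma nseq_first_hom: "is_nseq C n (A, \<alpha>) \<Longrightarrow> \<alpha> 1 \<in> hom C (A 1) (A 2)"
  using n_ge_3 unfolding is_nseq_Pair by (auto simp: numeral_2_eq_2)

lemma fst_lrot: "fst (lrot C n X) = (\<lambda>i. if i < n then fst X (Suc i) else sO C (fst X 1))"
  unfolding lrot_def by (simp add: case_prod_beta)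

lemma lrot_nseq: assumes X: "is_nseq C n X" shows "is_nseq C n (lrot C n X)"
proof -
  obtain A \<alpha> where X_eq: "X = (A, \<alpha>)" by fastforce
  have ob: "\<And>i. i \<in> {1..n} \<Longrightarrow> A i \<in> ob C"
    and maps: "\<And>i. i \<in> {1..<n} \<Longrightarrow> \<alpha> i \<in> hom C (A i) (A (Suc i))"
    and last: "\<alpha> n \<in> hom C (A n) (sO C (A 1))"
    using X unfolding X_eq is_nseq_Pair by auto
  have "sM C (\<alpha> 1) \<in> hom C (sO C (A 1)) (sO C (A 2))"
    using sM_hom nseq_first_hom X X_eq by blast
  then have rot_last: "(if even n then sM C (\<alpha> 1) else mneg C (sM C (\<alpha> 1)))
      \<in> hom C (sO C (A 1)) (sO C (A 2))"
    using mneg_hom by simp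
  show ?thesis
    unfolding X_eq lrot_def prod.case is_nseq_Pair
  proof (intro conjI ballI)
    fix i assume "i \<in> {1..n}"
    then show "(if i < n then A (Suc i) else sO C (A 1)) \<in> ob C"
      using ob sO_ob[OF ob] n_ge_3 by auto
  next
    fix i assume i: "i \<in> {1..<n}"
    show "(if i < n then \<alpha> (Suc i) else if even n then sM C (\<alpha> 1) else mneg C (sM C (\<alpha> 1)))
      \<in> hom C (if i < n then A (Suc i) else sO C (A 1)) (if Suc i < n then A (Suc (Suc i)) else sO C (A 1))"
    proof (cases "Suc i < n")
      case True
      then show ?thesis using i maps[of "Suc i"] by auto
    next
      case False
      then have "Suc i = n" using i by auto
      then show ?thesis using i last by auto
    qed
  qed (use rot_last n_ge_3 in \<open>simp add: numeral_2_eq_2\<close>)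
qed

lemma seq_isoI:
  assumes "\<And>i. i \<in> {1..n} \<Longrightarrow> is_iso C (A i) (B i) (\<phi> i)"
    and "\<And>i. i \<in> {1..<n} \<Longrightarrow> cmp C (\<beta> i) (\<phi> i) = cmp C (\<phi> (Suc i)) (\<alpha> i)"
    and "cmp C (\<beta> n) (\<phi> n) = cmp C (sM C (\<phi> 1)) (\<alpha> n)"
  shows "seq_iso C n (A, \<alpha>) (B, \<beta>)"
  unfolding seq_iso_def seq_mor_def using assms unfolding is_iso_def by (intro exI[of _ \<phi>]) auto

text \<open>Sequences are functions on all of nat, so membership in N could depend on the junk values
  outside 1..n; it does not.\<close>
lemma angle_cong:
  assumes X: "(A, \<alpha>) \<in> N"
    and "\<And>i. i \<in> {1..n} \<Longrightarrow> B i = A i" and "\<And>i. i \<in> {1..n} \<Longrightarrow> \<beta> i = \<alpha> i"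
  shows "(B, \<beta>) \<in> N"
proof -
  have nseq: "is_nseq C n (A, \<alpha>)"
    using angle_nseq X by blast
  have one: "1 \<in> {1..n}" and last: "n \<in> {1..n}"
    using n_ge_3 by auto
  have nseqB: "is_nseq C n (B, \<beta>)"
    using nseq assms(2,3) one last unfolding is_nseq_Pair by auto
  have "seq_iso C n (A, \<alpha>) (B, \<beta>)"
  proof (rule seq_isoI[where \<phi> = "\<lambda>i. idm C (A i)"])
    fix i assume "i \<in> {1..n}"
    then show "is_iso C (A i) (B i) (idm C (A i))"
      using idm_iso assms(2) nseq unfolding is_nseq_Pair by auto
  next
    fix i assume i: "i \<in> {1..<n}"
    then have "\<alpha> i \<in> hom C (A i) (A (Suc i))"
      using nseq unfolding is_nseq_Pair by blast
    then show "cmp C (\<beta> i) (idm C (A i)) = cmp C (idm C (A (Suc i))) (\<alpha> i)"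
      using i assms(3) cmp_idm_left cmp_idm_right by auto
  next
    have "\<alpha> n \<in> hom C (A n) (sO C (A 1))"
      using nseq unfolding is_nseq_Pair by blast
    then show "cmp C (\<beta> n) (idm C (A n)) = cmp C (sM C (idm C (A 1))) (\<alpha> n)"
      using assms(3) last sM_idm angle_ob[OF X one] cmp_idm_left cmp_idm_right by auto
  qed
  then show ?thesis
    using angle_seq_iso X nseqB by blast
qed

text \<open>The trivial angle of B placed in degrees k and k + 1, with the zero object elsewhere;
  for k = 1 this is the trivial angle of axiom (N1)(b).\<close>

definition triv_obj :: "nat \<Rightarrow> 'o \<Rightarrow> nat \<Rightarrow> 'o" where
  "triv_obj k B i = (if i = k \<or> i = Suc k then B else zero_obj)"

definition triv_map :: "nat \<Rightarrow> 'o \<Rightarrow> nat \<Rightarrow> 'm" where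
  "triv_map k B i = (if i = k then idm C B
     else if i < n then mzero C (triv_obj k B i) (triv_obj k B (Suc i))
     else mzero C (triv_obj k B n) (sO C (triv_obj k B 1)))"

lemma triv_obj_ob: "B \<in> ob C \<Longrightarrow> triv_obj k B i \<in> ob C"
  unfolding triv_obj_def using zero_obj_ob by auto

lemma triv_nseq:
  assumes B: "B \<in> ob C" and k: "k < n"
  shows "is_nseq C n (triv_obj k B, triv_map k B)"
  unfolding is_nseq_Pair
proof (intro conjI ballI)
  fix i assume "i \<in> {1..<n}"
  then show "triv_map k B i \<in> hom C (triv_obj k B i) (triv_obj k B (Suc i))"
    using idm_hom[OF B] mzero_hom B zero_obj_ob by (auto simp: triv_map_def triv_obj_def)
qed (use B k triv_obj_ob sO_ob mzero_hom in \<open>auto simp: triv_map_def\<close>)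

lemma triv_angle_1: assumes B: "B \<in> ob C" shows "(triv_obj 1 B, triv_map 1 B) \<in> N"
  using n_ge_3
  by (intro angle_cong[OF trivial_angle[OF B is_zero_obj_zero_obj]])
    (auto simp: triv_obj_def triv_map_def numeral_2_eq_2)

lemma triv_lrot_iso:
  assumes B: "B \<in> ob C" and k: "1 \<le> k" "Suc k < n"
  shows "seq_iso C n (triv_obj k B, triv_map k B) (lrot C n (triv_obj (Suc k) B, triv_map (Suc k) B))"
proof -
  obtain YA Ya where rot: "lrot C n (triv_obj (Suc k) B, triv_map (Suc k) B) = (YA, Ya)"
    by fastforce
  have nseq: "is_nseq C n (triv_obj k B, triv_map k B)"
    using triv_nseq[OF B] k by simp
  have nseq_rot: "is_nseq C n (YA, Ya)"
    using lrot_nseq[OF triv_nseq[OF B, of "Suc k"]] rot k by simp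
  have YA: "YA i = (if i < n then triv_obj k B i else sO C zero_obj)" for i
    using arg_cong[OF rot, of fst] k unfolding fst_lrot by (auto simp: triv_obj_def)
  have Ya_k: "Ya k = idm C B"
    using arg_cong[OF rot, of snd] k unfolding lrot_def by (auto simp: triv_map_def)
  define \<phi> where "\<phi> i = (if i = n then mzero C zero_obj (sO C zero_obj) else idm C (triv_obj k B i))" for i
  have zero_n: "triv_obj k B n = zero_obj"
    using k by (simp add: triv_obj_def)
  have iso: "is_iso C (triv_obj k B i) (YA i) (\<phi> i)" if "i \<in> {1..n}" for i
    using that zero_obj_iso[OF is_zero_obj_zero_obj zero_obj_sO[OF is_zero_obj_zero_obj]]
      idm_iso[OF triv_obj_ob[OF B]] zero_n
    by (cases "i = n") (auto simp: \<phi>_def YA)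
  have \<phi>_hom: "\<phi> i \<in> hom C (triv_obj k B i) (YA i)" if "i \<in> {1..n}" for i
    using iso[OF that] unfolding is_iso_def by blast
  have square: "cmp C (Ya i) (\<phi> i) = cmp C (\<phi> (Suc i)) (triv_map k B i)" if i: "i \<in> {1..<n}" for i
  proof (cases "i = k")
    case True
    then show ?thesis
      using Ya_k k by (simp add: \<phi>_def triv_map_def triv_obj_def)
  next
    case False
    have "is_zero_obj C (triv_obj k B i) \<or> is_zero_obj C (YA (Suc i))"
      using False i k is_zero_obj_zero_obj zero_obj_sO[OF is_zero_obj_zero_obj]
      by (auto simp: YA triv_obj_def)
    moreover have "cmp C (Ya i) (\<phi> i) \<in> hom C (triv_obj k B i) (YA (Suc i))"
      using cmp_hom[OF \<phi>_hom] i nseq_rot unfolding is_nseq_Pair by simp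
    moreover have "cmp C (\<phi> (Suc i)) (triv_map k B i) \<in> hom C (triv_obj k B i) (YA (Suc i))"
      using cmp_hom[OF _ \<phi>_hom] i nseq unfolding is_nseq_Pair by simp
    ultimately show ?thesis
      using zero_obj_hom_eq by blast
  qed
  have Ya_n: "Ya n \<in> hom C (YA n) (sO C (YA 1))"
    and map_n: "triv_map k B n \<in> hom C (triv_obj k B n) (sO C (triv_obj k B 1))"
    using nseq nseq_rot unfolding is_nseq_Pair by blast+
  have last_square: "cmp C (Ya n) (\<phi> n) = cmp C (sM C (\<phi> 1)) (triv_map k B n)"
  proof (rule zero_obj_hom_eq)
    show "cmp C (Ya n) (\<phi> n) \<in> hom C (triv_obj k B n) (sO C (YA 1))"
      using cmp_hom[OF \<phi>_hom Ya_n] n_ge_3 by simp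
    show "cmp C (sM C (\<phi> 1)) (triv_map k B n) \<in> hom C (triv_obj k B n) (sO C (YA 1))"
      using cmp_hom[OF map_n sM_hom[OF \<phi>_hom]] n_ge_3 by simp
  qed (use zero_n is_zero_obj_zero_obj in simp)
  show ?thesis
    unfolding rot by (rule seq_isoI[OF iso square last_square])
qed

lemma triv_angle:
  assumes B: "B \<in> ob C" and k: "1 \<le> k" "k < n"
  shows "(triv_obj k B, triv_map k B) \<in> N"
  using k
proof (induction k rule: nat_induct_at_least)
  case base
  then show ?case using triv_angle_1[OF B] by simp
next
  case (Suc k)
  then have "lrot C n (triv_obj (Suc k) B, triv_map (Suc k) B) \<in> N"
    using angle_seq_iso triv_lrot_iso[OF B] lrot_nseq triv_nseq[OF B] by simp
  then show ?case
    using angle_lrot_iff triv_nseq[OF B] Suc.prems by blast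
qed

lemma dsum_angle_exists:
  assumes X: "(A, \<alpha>) \<in> N" and Y: "(B, \<beta>) \<in> N"
    and bp: "\<And>i. i \<in> {1..n} \<Longrightarrow> biprod C (A i) (B i) (D i) (j1 i) (j2 i) (q1 i) (q2 i)"
  shows "\<exists>\<sigma>. (D, \<sigma>) \<in> N \<and>
    \<sigma> 1 = madd C (cmp C (j1 2) (cmp C (\<alpha> 1) (q1 1))) (cmp C (j2 2) (cmp C (\<beta> 1) (q2 1)))"
proof -
  define \<sigma> where "\<sigma> i = (if i < n
      then madd C (cmp C (j1 (Suc i)) (cmp C (\<alpha> i) (q1 i))) (cmp C (j2 (Suc i)) (cmp C (\<beta> i) (q2 i)))
      else madd C (cmp C (sM C (j1 1)) (cmp C (\<alpha> n) (q1 n))) (cmp C (sM C (j2 1)) (cmp C (\<beta> n) (q2 n))))"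
    for i
  have nX: "is_nseq C n (A, \<alpha>)" and nY: "is_nseq C n (B, \<beta>)"
    using angle_nseq X Y by auto
  have bp_hom: "j1 i \<in> hom C (A i) (D i)" "j2 i \<in> hom C (B i) (D i)"
      "q1 i \<in> hom C (D i) (A i)" "q2 i \<in> hom C (D i) (B i)" if "i \<in> {1..n}" for i
    using bp[OF that] unfolding biprod_def by blast+
  have "is_nseq C n (D, \<sigma>)"
    unfolding is_nseq_Pair
  proof (intro conjI ballI)
    fix i assume "i \<in> {1..n}"
    then show "D i \<in> ob C" using bp biprod_ob by blast
  next
    fix i assume i: "i \<in> {1..<n}"
    then have i': "i \<in> {1..n}" "Suc i \<in> {1..n}" by auto
    have "\<alpha> i \<in> hom C (A i) (A (Suc i))" "\<beta> i \<in> hom C (B i) (B (Suc i))"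
      using i nX nY unfolding is_nseq_Pair by blast+
    then show "\<sigma> i \<in> hom C (D i) (D (Suc i))"
      using i madd_hom[OF cmp_hom[OF cmp_hom] cmp_hom[OF cmp_hom]] bp_hom[OF i'(1)] bp_hom[OF i'(2)]
      unfolding \<sigma>_def by simp
  next
    have ends: "1 \<in> {1..n}" "n \<in> {1..n}" using n_ge_3 by auto
    have "\<alpha> n \<in> hom C (A n) (sO C (A 1))" "\<beta> n \<in> hom C (B n) (sO C (B 1))"
      using nX nY unfolding is_nseq_Pair by blast+
    then show "\<sigma> n \<in> hom C (D n) (sO C (D 1))"
      using madd_hom[OF cmp_hom[OF cmp_hom] cmp_hom[OF cmp_hom]] bp_hom[OF ends(1)] bp_hom[OF ends(2)]
        sM_hom unfolding \<sigma>_def by simp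
  qed
  moreover have "is_dsum C n (A, \<alpha>) (B, \<beta>) (D, \<sigma>)"
    unfolding is_dsum_def prod.case
    by (intro exI[of _ j1] exI[of _ j2] exI[of _ q1] exI[of _ q2]) (simp add: \<sigma>_def bp)
  ultimately have "(D, \<sigma>) \<in> N"
    using angle_dsum[OF X Y] by blast
  moreover have "\<sigma> 1 = madd C (cmp C (j1 2) (cmp C (\<alpha> 1) (q1 1))) (cmp C (j2 2) (cmp C (\<beta> 1) (q2 1)))"
    using n_ge_3 by (simp add: \<sigma>_def numeral_2_eq_2)
  ultimately show ?thesis
    by blast
qed

text \<open>Direct sum with the trivial angle of B in degrees k, k + 1; besides A_k it also replaces
  A_(k+1), by A_(k+1) \<oplus> B.\<close>
lemma angle_add_triv:
  assumes X: "(A, \<alpha>) \<in> N" and k: "3 \<le> k" "k < n" and B: "B \<in> ob C"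
    and bp: "biprod C (A k) B D i1 i2 p1 p2"
  shows "\<exists>X'\<in>N. fst X' k = D \<and> (\<forall>i. i \<noteq> k \<and> i \<noteq> Suc k \<longrightarrow> fst X' i = A i) \<and> snd X' 1 = \<alpha> 1"
proof -
  have ob: "\<And>i. i \<in> {1..n} \<Longrightarrow> A i \<in> ob C"
    using angle_ob[OF X] .
  obtain D' i1' i2' p1' p2' where bp': "biprod C (A (Suc k)) B D' i1' i2' p1' p2'"
    using biprod_exists ob k B by fastforce
  define DD where "DD i = (if i = k then D else if i = Suc k then D' else A i)" for i
  define J1 where "J1 i = (if i = k then i1 else if i = Suc k then i1' else idm C (A i))" for i
  define J2 where "J2 i = (if i = k then i2 else if i = Suc k then i2' else mzero C zero_obj (A i))" for i
  define Q1 where "Q1 i = (if i = k then p1 else if i = Suc k then p1' else idm C (A i))" for i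
  define Q2 where "Q2 i = (if i = k then p2 else if i = Suc k then p2' else mzero C (A i) zero_obj)" for i
  have triv: "(triv_obj k B, triv_map k B) \<in> N"
    using triv_angle[OF B] k by simp
  have bpi: "biprod C (A i) (triv_obj k B i) (DD i) (J1 i) (J2 i) (Q1 i) (Q2 i)" if "i \<in> {1..n}" for i
  proof -
    consider "i = k" | "i = Suc k" | "i \<noteq> k" "i \<noteq> Suc k" by blast
    then show ?thesis
    proof cases
      case 3
      then show ?thesis
        using biprod_zero_right[OF ob[OF that] is_zero_obj_zero_obj]
        by (simp add: triv_obj_def DD_def J1_def J2_def Q1_def Q2_def)
    qed (use bp bp' in \<open>simp_all add: triv_obj_def DD_def J1_def J2_def Q1_def Q2_def\<close>)
  qed
  obtain \<sigma> where angle: "(DD, \<sigma>) \<in> N"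
    and \<sigma>_1: "\<sigma> 1 = madd C (cmp C (J1 2) (cmp C (\<alpha> 1) (Q1 1)))
                            (cmp C (J2 2) (cmp C (triv_map k B 1) (Q2 1)))"
    using dsum_angle_exists[OF X triv bpi] by blast
  have ob12: "A 1 \<in> ob C" "A 2 \<in> ob C"
    using ob n_ge_3 by auto
  have \<alpha>_1: "\<alpha> 1 \<in> hom C (A 1) (A 2)"
    using nseq_first_hom angle_nseq[OF X] by blast
  have "triv_map k B 1 \<in> hom C zero_obj zero_obj"
    using k zero_obj_ob mzero_hom by (simp add: triv_map_def triv_obj_def)
  then have "cmp C (mzero C zero_obj (A 2)) (cmp C (triv_map k B 1) (mzero C (A 1) zero_obj))
      = mzero C (A 1) (A 2)"
    using cmp_through_zero_obj[OF is_zero_obj_zero_obj cmp_hom[OF mzero_hom] mzero_hom]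
      ob12 zero_obj_ob by blast
  then have "\<sigma> 1 = \<alpha> 1"
    using k \<sigma>_1 \<alpha>_1 cmp_idm_left cmp_idm_right madd_mzero_right
    by (simp add: J1_def J2_def Q1_def Q2_def numeral_2_eq_2)
  moreover have "DD k = D" "\<And>i. i \<noteq> k \<and> i \<noteq> Suc k \<longrightarrow> DD i = A i"
    by (simp_all add: DD_def)
  ultimately show ?thesis
    using angle by (intro bexI[of _ "(DD, \<sigma>)"]) simp_all
qed


end

section \<open>Relations in the Grothendieck group\<close>

lemma (in preadditive_category) gen_isomorphic: "isomorphic C A B \<Longrightarrow> gen C A = gen C B"
  unfolding gen_def isocls_def using isomorphic_sym isomorphic_trans by metis

lemma single_sum: "Poly_Mapping.single c (\<Sum>i\<in>I. g i) = (\<Sum>i\<in>I. Poly_Mapping.single c (g i))"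
  by (induction I rule: infinite_finite_induct) (auto simp: single_add)

lemma alternating_sum_odd:
  assumes "odd n" shows "(\<Sum>i = 1..n. (-1::int) ^ (i + 1)) = 1"
proof -
  have "(\<Sum>i = 1..2 * m + 1. (-1::int) ^ (i + 1)) = 1" for m
    by (induction m) (simp_all add: sum.cl_ivl_Suc)
  then show ?thesis
    using assms by (metis oddE)
qed

context
  fixes G :: "('a \<Rightarrow>\<^sub>0 int) set" and S :: "'a set"
  assumes G: "subgroup G (free_Abelian_group S)"
begin

lemma free_Abelian_subgroup_zero: "0 \<in> G"
  using subgroup.one_closed[OF G] by simp

lemma free_Abelian_subgroup_add: "a \<in> G \<Longrightarrow> b \<in> G \<Longrightarrow> a + b \<in> G"
  using subgroup.m_closed[OF G] by simp

lemma free_Abelian_subgroup_uminus: "a \<in> G \<Longrightarrow> - a \<in> G"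
  using subgroup.m_inv_closed[OF G] subgroup.subset[OF G] by fastforce

lemma free_Abelian_subgroup_diff: "a \<in> G \<Longrightarrow> b \<in> G \<Longrightarrow> a - b \<in> G"
  using free_Abelian_subgroup_add free_Abelian_subgroup_uminus by (metis diff_conv_add_uminus)

lemma free_Abelian_subgroup_sum: "(\<And>i. i \<in> I \<Longrightarrow> f i \<in> G) \<Longrightarrow> sum f I \<in> G"
  by (induction I rule: infinite_finite_induct)
    (auto simp: free_Abelian_subgroup_zero free_Abelian_subgroup_add)

lemma free_Abelian_subgroup_single_sign:
  "Poly_Mapping.single c ((-1) ^ m) \<in> G \<longleftrightarrow> Poly_Mapping.single c 1 \<in> G"
  using free_Abelian_subgroup_uminus by (cases "even m") (force simp: single_uminus)+

end

locale odd_nangulated_category = nangulated_category +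
  assumes odd: "odd n"
begin

lemma gen_carrier: "A \<in> ob C \<Longrightarrow> gen C A \<in> carrier (Fgrp C)"
  by (simp add: gen_def Fgrp_def)

lemma chi_carrier: "is_nseq C n X \<Longrightarrow> chi C n X \<in> carrier (Fgrp C)"
  unfolding chi_def Fgrp_def
  by (intro sum_closed_free_Abelian_group) (auto simp: is_nseq_def split: prod.splits)

lemma Rgrp_eq: "Rgrp C n N = generate (Fgrp C) (chi C n ` N)"
  using odd by (simp add: Rgrp_def)

lemma Rgrp_subgroup: "subgroup (Rgrp C n N) (Fgrp C)"
  unfolding Rgrp_eq Fgrp_def
  using group.generate_is_subgroup[OF group_free_Abelian_group] chi_carrier angle_nseq
  by (metis Fgrp_def image_subset_iff)

lemma chi_in_Rgrp: "X \<in> N \<Longrightarrow> chi C n X \<in> Rgrp C n N"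
  unfolding Rgrp_eq by (blast intro: generate.incl)

lemma partial_chi_mem:
  assumes G: "subgroup G (Fgrp C)" and chi: "chi C n X \<in> G" and J: "J \<subseteq> {1..n}"
    and rest: "\<And>i. i \<in> {1..n} - J \<Longrightarrow> gen C (fst X i) \<in> G"
  shows "(\<Sum>i\<in>J. Poly_Mapping.single (isocls C (fst X i)) ((-1) ^ (i + 1))) \<in> G"
proof -
  let ?t = "\<lambda>i. Poly_Mapping.single (isocls C (fst X i)) ((-1::int) ^ (i + 1))"
  note G' = G[unfolded Fgrp_def]
  have "?t i \<in> G" if "i \<in> {1..n} - J" for i
    using rest[OF that] unfolding gen_def by (rule free_Abelian_subgroup_single_sign[OF G', THEN iffD2])
  then have rest_sum: "sum ?t ({1..n} - J) \<in> G"
    by (rule free_Abelian_subgroup_sum[OF G'])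
  have split: "chi C n X = sum ?t ({1..n} - J) + sum ?t J"
    unfolding chi_def by (rule sum.subset_diff[OF J finite_atLeastAtMost])
  show ?thesis
    using free_Abelian_subgroup_diff[OF G' chi rest_sum] unfolding split add_diff_cancel_left' .
qed

lemma gen_mem_of_chi_mem:
  assumes G: "subgroup G (Fgrp C)" and chi: "chi C n X \<in> G" and j: "j \<in> {1..n}"
    and rest: "\<And>i. i \<in> {1..n} - {j} \<Longrightarrow> gen C (fst X i) \<in> G"
  shows "gen C (fst X j) \<in> G"
proof -
  have "Poly_Mapping.single (isocls C (fst X j)) ((-1) ^ (j + 1)) \<in> G"
    using partial_chi_mem[OF G chi _ rest, of "{j}"] j by simp
  then show ?thesis
    using free_Abelian_subgroup_single_sign[OF G[unfolded Fgrp_def]] unfolding gen_def by blast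
qed

lemma gen_zero_obj_in_Rgrp: "gen C zero_obj \<in> Rgrp C n N"
proof -
  have "chi C n (triv_obj 1 zero_obj, triv_map 1 zero_obj)
      = Poly_Mapping.single (isocls C zero_obj) (\<Sum>i = 1..n. (-1) ^ (i + 1))"
    unfolding chi_def single_sum by (simp add: triv_obj_def)
  then show ?thesis
    using chi_in_Rgrp[OF triv_angle_1[OF zero_obj_ob]] alternating_sum_odd[OF odd]
    by (simp add: gen_def)
qed

lemma gen_add_gen_sO_in_Rgrp:
  assumes A: "A \<in> ob C" shows "gen C A + gen C (sO C A) \<in> Rgrp C n N"
proof -
  let ?X = "lrot C n (triv_obj 1 A, triv_map 1 A)"
  have X: "?X \<in> N"
    using angle_lrot_iff triv_nseq triv_angle_1 A n_ge_3 by simp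
  have obj: "fst ?X i = (if i = 1 then A else if i = n then sO C A else zero_obj)" if "i \<in> {1..n}" for i
    using that n_ge_3 unfolding fst_lrot by (auto simp: triv_obj_def)
  have "(\<Sum>i\<in>{1, n}. Poly_Mapping.single (isocls C (fst ?X i)) ((-1) ^ (i + 1))) \<in> Rgrp C n N"
    using n_ge_3 obj gen_zero_obj_in_Rgrp
    by (intro partial_chi_mem[OF Rgrp_subgroup chi_in_Rgrp[OF X]]) auto
  then show ?thesis
    using n_ge_3 odd obj by (simp add: gen_def)
qed

lemma gen_biprod_in_Rgrp:
  assumes A: "A \<in> ob C" and B: "B \<in> ob C" and bp: "biprod C A B D i1 i2 p1 p2"
  shows "gen C A - gen C D + gen C B \<in> Rgrp C n N"
proof -
  define DD where "DD i = (if i = 1 then A else if i = 2 then D else if i = 3 then B else zero_obj)" for i :: nat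
  define J1 where "J1 i = (if i = 1 then idm C A else if i = 2 then i1
      else if i = 3 then mzero C zero_obj B else idm C zero_obj)" for i :: nat
  define J2 where "J2 i = (if i = 1 then mzero C zero_obj A else if i = 2 then i2
      else if i = 3 then idm C B else mzero C zero_obj zero_obj)" for i :: nat
  define Q1 where "Q1 i = (if i = 1 then idm C A else if i = 2 then p1
      else if i = 3 then mzero C B zero_obj else idm C zero_obj)" for i :: nat
  define Q2 where "Q2 i = (if i = 1 then mzero C A zero_obj else if i = 2 then p2
      else if i = 3 then idm C B else mzero C zero_obj zero_obj)" for i :: nat
  have "biprod C (triv_obj 1 A i) (triv_obj 2 B i) (DD i) (J1 i) (J2 i) (Q1 i) (Q2 i)" for i
  proof -
    consider "i = 1" | "i = 2" | "i = 3" | "i \<noteq> 1" "i \<noteq> 2" "i \<noteq> 3" by blast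
    then show ?thesis
    proof cases
      case 1
      then show ?thesis using biprod_zero_right[OF A is_zero_obj_zero_obj]
        by (simp add: triv_obj_def DD_def J1_def J2_def Q1_def Q2_def)
    next
      case 2
      then show ?thesis using bp
        by (simp add: triv_obj_def DD_def J1_def J2_def Q1_def Q2_def)
    next
      case 3
      then show ?thesis using biprod_zero_left[OF B is_zero_obj_zero_obj]
        by (simp add: triv_obj_def DD_def J1_def J2_def Q1_def Q2_def)
    next
      case 4
      then show ?thesis using biprod_zero_right[OF zero_obj_ob is_zero_obj_zero_obj]
        by (simp add: triv_obj_def DD_def J1_def J2_def Q1_def Q2_def numeral_2_eq_2 numeral_3_eq_3)
    qed
  qed
  moreover have "(triv_obj 2 B, triv_map 2 B) \<in> N"
    using triv_angle[OF B] n_ge_3 by simp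
  ultimately obtain \<sigma> where X: "(DD, \<sigma>) \<in> N"
    using dsum_angle_exists[OF triv_angle_1[OF A]] by blast
  have "(\<Sum>i\<in>{1, 2, 3}. Poly_Mapping.single (isocls C (fst (DD, \<sigma>) i)) ((-1) ^ (i + 1)))
      \<in> Rgrp C n N"
    by (rule partial_chi_mem[OF Rgrp_subgroup chi_in_Rgrp[OF X]])
      (use n_ge_3 gen_zero_obj_in_Rgrp in \<open>auto simp: DD_def\<close>)
  then show ?thesis
    by (simp add: DD_def gen_def single_uminus algebra_simps)
qed

lemma gen_biprod_sO_in_Rgrp:
  assumes A: "A \<in> ob C" and bp: "biprod C A (sO C A) D i1 i2 p1 p2"
  shows "gen C D \<in> Rgrp C n N"
proof -
  note R = Rgrp_subgroup[unfolded Fgrp_def]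
  have "(gen C A + gen C (sO C A)) - (gen C A - gen C D + gen C (sO C A)) \<in> Rgrp C n N"
    using free_Abelian_subgroup_diff[OF R gen_add_gen_sO_in_Rgrp[OF A]
        gen_biprod_in_Rgrp[OF A sO_ob[OF A] bp]] .
  then show ?thesis
    by (simp add: algebra_simps)
qed

lemma K0_projection_hom: "group_hom (Fgrp C) (K0 C n N) (\<lambda>a. Rgrp C n N #>\<^bsub>Fgrp C\<^esub> a)"
proof -
  have "Rgrp C n N \<lhd> Fgrp C"
    using comm_group.subgroup_imp_normal[OF abelian_free_Abelian_group Rgrp_subgroup[unfolded Fgrp_def]]
    unfolding Fgrp_def .
  then show ?thesis
    unfolding K0_def group_hom_def group_hom_axioms_def
    using normal.factorgroup_is_group normal.r_coset_hom_Mod group_free_Abelian_group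
    by (metis Fgrp_def)
qed

lemma K0_projection_Rgrp: "a \<in> Rgrp C n N \<Longrightarrow> Rgrp C n N #>\<^bsub>Fgrp C\<^esub> a = \<one>\<^bsub>K0 C n N\<^esub>"
  using subgroup.rcos_const[OF Rgrp_subgroup] group_free_Abelian_group unfolding K0_def Fgrp_def
  by (simp add: FactGroup_def)

lemma angle_exists_Rgrp_middle:
  assumes f: "f \<in> hom C A1 A2" and m: "m \<le> n"
  shows "\<exists>X\<in>N. fst X 1 = A1 \<and> fst X 2 = A2 \<and> snd X 1 = f \<and>
           (\<forall>i. 3 \<le> i \<and> i < m \<longrightarrow> gen C (fst X i) \<in> Rgrp C n N)"
  using m
proof (induction m)
  case 0
  then show ?case using angle_exists[OF f] by auto
next
  case (Suc m)
  then obtain A \<alpha> where X: "(A, \<alpha>) \<in> N" "A 1 = A1" "A 2 = A2" "\<alpha> 1 = f"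
    and middle: "\<forall>i. 3 \<le> i \<and> i < m \<longrightarrow> gen C (A i) \<in> Rgrp C n N"
    by fastforce
  show ?case
  proof (cases "3 \<le> m")
    case False
    then show ?thesis using X by (intro bexI[of _ "(A, \<alpha>)"]) auto
  next
    case True
    have m: "m < n" and A_m: "A m \<in> ob C"
      using Suc.prems True angle_ob[OF X(1)] by auto
    obtain D i1 i2 p1 p2 where bp: "biprod C (A m) (sO C (A m)) D i1 i2 p1 p2"
      using biprod_exists[OF A_m sO_ob[OF A_m]] by blast
    obtain X' where "X' \<in> N" "fst X' m = D" "\<forall>i. i \<noteq> m \<and> i \<noteq> Suc m \<longrightarrow> fst X' i = A i"
      "snd X' 1 = \<alpha> 1"
      using angle_add_triv[OF X(1) True m sO_ob[OF A_m] bp] by blast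
    moreover have "gen C D \<in> Rgrp C n N"
      using gen_biprod_sO_in_Rgrp[OF A_m bp] .
    ultimately show ?thesis
      using X middle True by (intro bexI[of _ X']) (auto simp: less_Suc_eq)
  qed
qed

end

locale K0_subgroup = odd_nangulated_category C n N for C :: "('o, 'm) catS" and n N +
  fixes G :: "('o set \<Rightarrow>\<^sub>0 int) set"
  assumes subgroup: "subgroup G (Fgrp C)" and Rgrp_subset: "Rgrp C n N \<subseteq> G"
begin

definition class_objs :: "'o set" where
  "class_objs = {A \<in> ob C. gen C A \<in> G}"

lemma sO_class_objs_iff: assumes A: "A \<in> ob C" shows "sO C A \<in> class_objs \<longleftrightarrow> A \<in> class_objs"
proof -
  note G = subgroup[unfolded Fgrp_def]
  have sum: "gen C A + gen C (sO C A) \<in> G"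
    using gen_add_gen_sO_in_Rgrp[OF A] Rgrp_subset by blast
  show ?thesis
    unfolding class_objs_def
    using free_Abelian_subgroup_diff[OF G sum] A sO_ob[OF A] by force
qed

lemma zero_obj_class_objs: "zero_obj \<in> class_objs"
  unfolding class_objs_def using zero_obj_ob gen_zero_obj_in_Rgrp Rgrp_subset by blast

lemma biprod_class_objs:
  assumes A: "A \<in> class_objs" and B: "B \<in> class_objs" and bp: "biprod C A B D i1 i2 p1 p2"
  shows "D \<in> class_objs"
proof -
  note G = subgroup[unfolded Fgrp_def]
  have "gen C A \<in> G" "gen C B \<in> G" "A \<in> ob C" "B \<in> ob C"
    using A B unfolding class_objs_def by blast+
  then have "(gen C A + gen C B) - (gen C A - gen C D + gen C B) \<in> G"
    using free_Abelian_subgroup_diff[OF G free_Abelian_subgroup_add[OF G]] gen_biprod_in_Rgrp bp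
      Rgrp_subset by blast
  then show ?thesis
    unfolding class_objs_def using biprod_ob[OF bp] by (simp add: algebra_simps)
qed

lemma isomorphic_class_objs: "A \<in> class_objs \<Longrightarrow> isomorphic C A B \<Longrightarrow> B \<in> class_objs"
  unfolding class_objs_def isomorphic_def is_iso_def
  using gen_isomorphic[unfolded isomorphic_def is_iso_def] hom_obD by fastforce

lemma complete_class_objs:
  assumes X: "X \<in> N" and j: "j \<in> {1..n}" and rest: "\<And>i. i \<in> {1..n} - {j} \<Longrightarrow> fst X i \<in> class_objs"
  shows "fst X j \<in> class_objs"
proof -
  have "chi C n X \<in> G"
    using chi_in_Rgrp[OF X] Rgrp_subset by blast
  moreover have "gen C (fst X i) \<in> G" if "i \<in> {1..n} - {j}" for i
    using rest[OF that] unfolding class_objs_def by blast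
  ultimately have "gen C (fst X j) \<in> G"
    by (rule gen_mem_of_chi_mem[OF subgroup _ j])
  moreover have "fst X j \<in> ob C"
    using angle_ob[of "fst X" "snd X"] X j by simp
  ultimately show ?thesis
    unfolding class_objs_def by blast
qed

lemma dense_sub_class_objs: "dense_sub C class_objs"
  unfolding dense_sub_def
proof
  fix A assume A: "A \<in> ob C"
  then obtain D i1 i2 p1 p2 where bp: "biprod C A (sO C A) D i1 i2 p1 p2"
    using biprod_exists sO_ob by blast
  then have "D \<in> class_objs"
    unfolding class_objs_def using gen_biprod_sO_in_Rgrp[OF A] Rgrp_subset biprod_ob by blast
  then show "\<exists>B\<in>class_objs. \<exists>Y i1 i2 p1 p2. biprod C A Y B i1 i2 p1 p2"
    using bp by blast
qed

lemma angle_exists_class_objs: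
  assumes A1: "A1 \<in> class_objs" and A2: "A2 \<in> class_objs" and f: "f \<in> hom C A1 A2"
  shows "\<exists>X\<in>N. fst X 1 = A1 \<and> fst X 2 = A2 \<and> snd X 1 = f \<and> (\<forall>i\<in>{1..n}. fst X i \<in> class_objs)"
proof -
  obtain A \<alpha> where X: "(A, \<alpha>) \<in> N" "A 1 = A1" "A 2 = A2" "\<alpha> 1 = f"
    and middle: "\<forall>i. 3 \<le> i \<and> i < n \<longrightarrow> gen C (A i) \<in> Rgrp C n N"
    using angle_exists_Rgrp_middle[OF f order_refl] by fastforce
  have below_n: "A i \<in> class_objs" if "i \<in> {1..n} - {n}" for i
  proof -
    have "i = 1 \<or> i = 2 \<or> 3 \<le> i \<and> i < n"
      using that by auto
    then show ?thesis
      using X A1 A2 middle Rgrp_subset angle_ob[OF X(1)] that unfolding class_objs_def by auto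
  qed
  then have "A n \<in> class_objs"
    using complete_class_objs[OF X(1), of n] n_ge_3 by simp
  then have "\<forall>i\<in>{1..n}. A i \<in> class_objs"
    using below_n by blast
  then show ?thesis
    using X by (intro bexI[of _ "(A, \<alpha>)"]) auto
qed

end

section \<open>Full n-angulated subcategories\<close>

lemma fullsub_simps [simp]:
  "ob (fullsub C S) = S" "hom (fullsub C S) A B = (if A \<in> S \<and> B \<in> S then hom C A B else {})"
  "cmp (fullsub C S) = cmp C" "idm (fullsub C S) = idm C" "madd (fullsub C S) = madd C"
  "mzero (fullsub C S) = mzero C" "sO (fullsub C S) = sO C" "sM (fullsub C S) = sM C"
  by (simp_all add: fullsub_def)

lemma hom_fullsubD: "f \<in> hom (fullsub C S) A B \<Longrightarrow> f \<in> hom C A B \<and> A \<in> S \<and> B \<in> S"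
  by (simp split: if_splits)

lemma biprod_fullsub_iff:
  "S \<subseteq> ob C \<Longrightarrow>
     biprod (fullsub C S) A B D i1 i2 p1 p2 \<longleftrightarrow> biprod C A B D i1 i2 p1 p2 \<and> A \<in> S \<and> B \<in> S \<and> D \<in> S"
  unfolding biprod_def by auto

lemma is_iso_fullsubD: "is_iso (fullsub C S) A B f \<Longrightarrow> is_iso C A B f"
  unfolding is_iso_def using hom_fullsubD by fastforce

lemma seq_mor_fullsub_iff:
  "seq_mor (fullsub C S) n X Y \<phi> \<longleftrightarrow> seq_mor C n X Y \<phi> \<and>
     (\<forall>i\<in>{1..n}. fst X i \<in> S \<and> fst Y i \<in> S)"
  unfolding seq_mor_def by (auto split: prod.splits if_splits)

lemma seq_iso_fullsubD:
  assumes "seq_iso (fullsub C S) n X Y" shows "seq_iso C n X Y"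
proof -
  obtain \<phi> where "seq_mor C n X Y \<phi>" "\<forall>i\<in>{1..n}. is_iso (fullsub C S) (fst X i) (fst Y i) (\<phi> i)"
    using assms unfolding seq_iso_def seq_mor_fullsub_iff by blast
  moreover from this(2) have "\<forall>i\<in>{1..n}. is_iso C (fst X i) (fst Y i) (\<phi> i)"
    by (metis is_iso_fullsubD)
  ultimately show ?thesis
    unfolding seq_iso_def by blast
qed

lemma is_dsum_fullsubD:
  "S \<subseteq> ob C \<Longrightarrow> is_dsum (fullsub C S) n X Y Z \<Longrightarrow> is_dsum C n X Y Z"
  unfolding is_dsum_def by (auto simp: biprod_fullsub_iff split: prod.splits) blast

lemma (in preadditive_category) preadditive_fullsub:
  assumes S: "S \<subseteq> ob C" shows "preadditive (fullsub C S)"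
proof -
  have "category (fullsub C S)"
    using S hom_obD hom_unique idm_hom cmp_hom cmp_idm_left cmp_idm_right cmp_assoc
    unfolding category_def fullsub_simps by (auto split: if_splits)
  moreover have "comm_group (homgrp (fullsub C S) A B)" if "A \<in> S" "B \<in> S" for A B
  proof -
    have "homgrp (fullsub C S) A B = homgrp C A B"
      using that unfolding homgrp_def by simp
    moreover have "comm_group (homgrp C A B)"
      using preadditive S that unfolding preadditive_def by blast
    ultimately show ?thesis
      by simp
  qed
  ultimately show ?thesis
    using preadditive unfolding preadditive_def fullsub_simps by (auto split: if_splits)
qed

locale nangulated_subclass = nangulated_category C n N for C :: "('o, 'm) catS" and n N +
  fixes S :: "'o set"
  assumes subset: "S \<subseteq> ob C"
    and zero_obj_in: "\<exists>Z\<in>S. is_zero_obj C Z"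
    and sO_iff: "A \<in> ob C \<Longrightarrow> sO C A \<in> S \<longleftrightarrow> A \<in> S"
    and biprod_closed: "A \<in> S \<Longrightarrow> B \<in> S \<Longrightarrow> biprod C A B D i1 i2 p1 p2 \<Longrightarrow> D \<in> S"
    and isomorphic_closed: "A \<in> S \<Longrightarrow> isomorphic C A B \<Longrightarrow> B \<in> S"
    and angle_exists_in: "A1 \<in> S \<Longrightarrow> A2 \<in> S \<Longrightarrow> f \<in> hom C A1 A2 \<Longrightarrow>
       \<exists>X\<in>N. fst X 1 = A1 \<and> fst X 2 = A2 \<and> snd X 1 = f \<and> (\<forall>i\<in>{1..n}. fst X i \<in> S)"
begin

abbreviation FS :: "('o, 'm) catS" where "FS \<equiv> fullsub C S"

abbreviation NS :: "('o, 'm) nseq set" where "NS \<equiv> {X \<in> N. \<forall>i\<in>{1..n}. fst X i \<in> S}"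

lemma sO_in: "A \<in> S \<Longrightarrow> sO C A \<in> S"
  using sO_iff subset by blast

lemma is_nseq_fullsub_iff: "is_nseq FS n X \<longleftrightarrow> is_nseq C n X \<and> (\<forall>i\<in>{1..n}. fst X i \<in> S)"
proof -
  have "1 \<in> {1..n}" using n_ge_3 by simp
  then show ?thesis
    using sO_in subset unfolding is_nseq_def by (auto split: prod.splits if_splits)
qed

lemma zero_obj_fullsub_iff: "is_zero_obj FS Z \<longleftrightarrow> is_zero_obj C Z \<and> Z \<in> S"
proof
  assume Z: "is_zero_obj FS Z"
  then have ZS: "Z \<in> S"
    unfolding is_zero_obj_def by simp
  obtain Z' where Z': "Z' \<in> S" "is_zero_obj C Z'"
    using zero_obj_in by blast
  obtain u v where u: "u \<in> hom C Z Z'" and v: "v \<in> hom C Z' Z"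
    using Z Z' ZS unfolding is_zero_obj_def by auto
  have "\<exists>!f. f \<in> hom C Z Z"
    using Z ZS unfolding is_zero_obj_def by simp
  then have "cmp C v u = idm C Z"
    using cmp_hom[OF u v] idm_hom ZS subset by blast
  then show "is_zero_obj C Z \<and> Z \<in> S"
    using zero_obj_retract[OF Z'(2) _ u v] ZS subset by blast
next
  assume "is_zero_obj C Z \<and> Z \<in> S"
  then have "\<forall>A\<in>S. (\<exists>!f. f \<in> hom C Z A) \<and> (\<exists>!f. f \<in> hom C A Z)" "Z \<in> S"
    unfolding is_zero_obj_def using subset by blast+
  then show "is_zero_obj FS Z"
    unfolding is_zero_obj_def by simp
qed

lemma mneg_fullsub:
  assumes f: "f \<in> hom C A B" and S: "A \<in> S" "B \<in> S"
  shows "mneg FS f = mneg C f"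
proof -
  have "(\<exists>A'\<in>X. \<exists>B'\<in>Y. f \<in> hom C A' B' \<and> g \<in> hom C A' B' \<and> madd C f g = mzero C A' B') \<longleftrightarrow>
        g \<in> hom C A B \<and> madd C f g = mzero C A B" if "A \<in> X" "B \<in> Y" for g X Y
    using that hom_unique[OF f] f by blast
  then have "(\<exists>A'\<in>ob FS. \<exists>B'\<in>ob FS. f \<in> hom FS A' B' \<and> g \<in> hom FS A' B' \<and> madd FS f g = mzero FS A' B')
      \<longleftrightarrow> (\<exists>A'\<in>ob C. \<exists>B'\<in>ob C. f \<in> hom C A' B' \<and> g \<in> hom C A' B' \<and> madd C f g = mzero C A' B')" for g
    using S subset by (simp cong: bex_cong) blast
  then show ?thesis
    unfolding mneg_def by simp
qed

lemma lrot_fullsub: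
  assumes X: "is_nseq C n X" and S: "\<forall>i\<in>{1..n}. fst X i \<in> S"
  shows "lrot FS n X = lrot C n X"
proof -
  obtain A \<alpha> where X_eq: "X = (A, \<alpha>)" by fastforce
  have "A 1 \<in> S" "A 2 \<in> S"
    using S n_ge_3 X_eq by auto
  then have "mneg FS (sM C (\<alpha> 1)) = mneg C (sM C (\<alpha> 1))"
    using mneg_fullsub sM_hom nseq_first_hom X X_eq sO_in by blast
  then show ?thesis
    unfolding X_eq lrot_def fullsub_simps prod.case by presburger
qed

lemma additive_fullsub: "additive FS"
  unfolding additive_def
proof (intro conjI)
  show "preadditive FS"
    using preadditive_fullsub[OF subset] .
  obtain Z where "Z \<in> S" "is_zero_obj C Z"
    using zero_obj_in by blast
  then have "is_zero_obj FS Z"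
    using zero_obj_fullsub_iff by simp
  then show "\<exists>Z. is_zero_obj FS Z" ..
  have "\<exists>D i1 i2 p1 p2. biprod FS A B D i1 i2 p1 p2" if AB: "A \<in> S" "B \<in> S" for A B
  proof -
    have "A \<in> ob C" "B \<in> ob C"
      using AB subset by auto
    then obtain D i1 i2 p1 p2 where bp: "biprod C A B D i1 i2 p1 p2"
      using biprod_exists by blast
    then have "biprod FS A B D i1 i2 p1 p2"
      using biprod_fullsub_iff[OF subset] biprod_closed[OF AB bp] AB by simp
    then show ?thesis by (intro exI) assumption
  qed
  then show "\<forall>A\<in>ob FS. \<forall>B\<in>ob FS. \<exists>D i1 i2 p1 p2. biprod FS A B D i1 i2 p1 p2"
    by simp
qed

lemma sigma_auto_fullsub: "sigma_auto FS"
  unfolding sigma_auto_def fullsub_simps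
proof (intro conjI)
  have "sO C ` S = S"
  proof
    show "S \<subseteq> sO C ` S"
    proof
      fix B assume B: "B \<in> S"
      then obtain A where "A \<in> ob C" "B = sO C A"
        using sO_surj subset by blast
      then show "B \<in> sO C ` S"
        using sO_iff B by blast
    qed
  qed (use sO_in in blast)
  then show "bij_betw (sO C) S S"
    using bij_betw_subset[OF sO_bij subset] by blast
  have "bij_betw (sM C) (hom C A B) (hom C (sO C A) (sO C B))" if "A \<in> S" "B \<in> S" for A B
    using sM_bij subset that by blast
  then show "\<forall>A\<in>S. \<forall>B\<in>S. bij_betw (sM C)
      (if A \<in> S \<and> B \<in> S then hom C A B else {}) (if sO C A \<in> S \<and> sO C B \<in> S then hom C (sO C A) (sO C B) else {})"
    using sO_in by simp
qed (use sM_idm sM_cmp subset in \<open>auto split: if_splits\<close>)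

lemma is_cone_fullsub:
  assumes X: "is_nseq C n (A, \<alpha>)" "\<forall>i\<in>{1..n}. A i \<in> S" and Y: "\<forall>i\<in>{1..n}. B i \<in> S"
    and cone: "is_cone C n (A, \<alpha>) (B, \<beta>) \<phi> (D, \<gamma>)"
  shows "(\<forall>i\<in>{1..n}. D i \<in> S) \<and> is_cone FS n (A, \<alpha>) (B, \<beta>) \<phi> (D, \<gamma>)"
proof -
  let ?src = "\<lambda>i. if i < n then A (Suc i) else sO C (A 1)"
  obtain i1 i2 p1 p2 where
    bp: "\<forall>i\<in>{1..n}. biprod C (?src i) (B i) (D i) (i1 i) (i2 i) (p1 i) (p2 i)" and
    eqs: "\<forall>i\<in>{1..<n}. \<gamma> i =
            madd C (madd C (cmp C (i1 (Suc i)) (cmp C (mneg C (\<alpha> (Suc i))) (p1 i)))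
                           (cmp C (i2 (Suc i)) (cmp C (\<phi> (Suc i)) (p1 i))))
                   (cmp C (i2 (Suc i)) (cmp C (\<beta> i) (p2 i)))"
         "\<gamma> n = madd C (madd C (cmp C (sM C (i1 1)) (cmp C (mneg C (sM C (\<alpha> 1))) (p1 n)))
                             (cmp C (sM C (i2 1)) (cmp C (sM C (\<phi> 1)) (p1 n))))
                     (cmp C (sM C (i2 1)) (cmp C (\<beta> n) (p2 n)))"
    using cone unfolding is_cone_def by auto
  have one: "1 \<in> {1..n}"
    using n_ge_3 by simp
  have src: "?src i \<in> S" if "i \<in> {1..n}" for i
    using X(2) sO_in[of "A 1"] one that by auto
  have D: "\<forall>i\<in>{1..n}. D i \<in> S"
    using biprod_closed[OF src] Y bp by blast
  have maps: "\<alpha> i \<in> hom C (A i) (?src i)" if "i \<in> {1..n}" for i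
    using X(1) that unfolding is_nseq_Pair by (cases "i < n") auto
  have "mneg FS (\<alpha> (Suc i)) = mneg C (\<alpha> (Suc i))" if "i \<in> {1..<n}" for i
    using that mneg_fullsub[OF maps] X(2) src by simp
  moreover have "A 1 \<in> S" "A 2 \<in> S"
    using X(2) n_ge_3 by auto
  then have "mneg FS (sM C (\<alpha> 1)) = mneg C (sM C (\<alpha> 1))"
    using mneg_fullsub[OF sM_hom[OF nseq_first_hom[OF X(1)]]] sO_in by blast
  moreover have "\<forall>i\<in>{1..n}. biprod FS (?src i) (B i) (D i) (i1 i) (i2 i) (p1 i) (p2 i)"
    using bp src Y D biprod_fullsub_iff[OF subset] by simp
  ultimately have "is_cone FS n (A, \<alpha>) (B, \<beta>) \<phi> (D, \<gamma>)"
    using eqs unfolding is_cone_def fullsub_simps prod.case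
    by (intro exI[of _ i1] exI[of _ i2] exI[of _ p1] exI[of _ p2]) simp
  then show ?thesis
    using D by blast
qed

lemma angle_lrot_iff_fullsub:
  assumes X: "is_nseq FS n X" shows "X \<in> NS \<longleftrightarrow> lrot FS n X \<in> NS"
proof -
  have nseq: "is_nseq C n X" and in_S: "\<forall>i\<in>{1..n}. fst X i \<in> S"
    using X is_nseq_fullsub_iff by auto
  have "\<forall>i\<in>{1..n}. fst (lrot C n X) i \<in> S"
    unfolding fst_lrot using in_S sO_in n_ge_3 by auto
  then show ?thesis
    using lrot_fullsub[OF nseq in_S] angle_lrot_iff[OF nseq] in_S by auto
qed

lemma nangulated_fullsub: "nangulated FS n NS"
  unfolding nangulated_def
proof (intro conjI)
  show "additive FS" by (rule additive_fullsub)
  show "sigma_auto FS" by (rule sigma_auto_fullsub)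
  show "\<forall>X\<in>NS. is_nseq FS n X"
    using is_nseq_fullsub_iff angle_nseq by blast
  show "\<forall>X\<in>NS. \<forall>Y\<in>NS. \<forall>Z. is_nseq FS n Z \<longrightarrow> is_dsum FS n X Y Z \<longrightarrow> Z \<in> NS"
    using is_nseq_fullsub_iff is_dsum_fullsubD[OF subset] angle_dsum by blast
  show "\<forall>Z\<in>NS. \<forall>X Y. is_nseq FS n X \<longrightarrow> is_nseq FS n Y \<longrightarrow> is_dsum FS n X Y Z \<longrightarrow> X \<in> NS"
    using is_nseq_fullsub_iff is_dsum_fullsubD[OF subset] angle_dsum_summand by blast
  show "\<forall>X\<in>NS. \<forall>Y. is_nseq FS n Y \<longrightarrow> seq_iso FS n X Y \<longrightarrow> Y \<in> NS"
    using is_nseq_fullsub_iff seq_iso_fullsubD angle_seq_iso by blast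
  show "\<forall>A\<in>ob FS. \<forall>Z. is_zero_obj FS Z \<longrightarrow>
        ((\<lambda>i. if i = 1 \<or> i = 2 then A else Z),
         (\<lambda>i. if i = 1 then idm FS A else if i = 2 then mzero FS A Z
              else if i < n then mzero FS Z Z else mzero FS Z (sO FS A))) \<in> NS"
    unfolding fullsub_simps using trivial_angle zero_obj_fullsub_iff subset by auto
  show "\<forall>A1\<in>ob FS. \<forall>A2\<in>ob FS. \<forall>f\<in>hom FS A1 A2. \<exists>X\<in>NS. fst X 1 = A1 \<and> fst X 2 = A2 \<and> snd X 1 = f"
    using angle_exists_in by fastforce
  show "\<forall>X. is_nseq FS n X \<longrightarrow> (X \<in> NS \<longleftrightarrow> lrot FS n X \<in> NS)"
    using angle_lrot_iff_fullsub by blast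
  show "\<forall>X\<in>NS. \<forall>Y\<in>NS. \<forall>f1 f2.
        f1 \<in> hom FS (fst X 1) (fst Y 1) \<longrightarrow> f2 \<in> hom FS (fst X 2) (fst Y 2) \<longrightarrow>
        cmp FS (snd Y 1) f1 = cmp FS f2 (snd X 1) \<longrightarrow>
        (\<exists>\<phi>. \<phi> 1 = f1 \<and> \<phi> 2 = f2 \<and> seq_mor FS n X Y \<phi>)"
    using angle_morphism_exists unfolding seq_mor_fullsub_iff by (simp split: if_splits)
  show "\<forall>X\<in>NS. \<forall>Y\<in>NS. \<forall>f1 f2.
        f1 \<in> hom FS (fst X 1) (fst Y 1) \<longrightarrow> f2 \<in> hom FS (fst X 2) (fst Y 2) \<longrightarrow>
        cmp FS (snd Y 1) f1 = cmp FS f2 (snd X 1) \<longrightarrow>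
        (\<exists>\<phi> Q. \<phi> 1 = f1 \<and> \<phi> 2 = f2 \<and> seq_mor FS n X Y \<phi> \<and> is_cone FS n X Y \<phi> Q \<and> Q \<in> NS)"
  proof (intro ballI allI impI)
    fix X Y f1 f2
    assume X: "X \<in> NS" and Y: "Y \<in> NS" and f1: "f1 \<in> hom FS (fst X 1) (fst Y 1)"
      and f2: "f2 \<in> hom FS (fst X 2) (fst Y 2)" and square: "cmp FS (snd Y 1) f1 = cmp FS f2 (snd X 1)"
    obtain \<phi> Q where \<phi>: "\<phi> 1 = f1" "\<phi> 2 = f2" "seq_mor C n X Y \<phi>" and Q: "is_cone C n X Y \<phi> Q" "Q \<in> N"
      using angle_cone_exists[of X Y f1 f2] X Y f1 f2 square by (auto split: if_splits)
    have "(\<forall>i\<in>{1..n}. fst Q i \<in> S) \<and> is_cone FS n X Y \<phi> Q"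
      using is_cone_fullsub[of "fst X" "snd X" "fst Y" "snd Y" \<phi> "fst Q" "snd Q"] Q X Y angle_nseq
      by simp
    then show "\<exists>\<phi> Q. \<phi> 1 = f1 \<and> \<phi> 2 = f2 \<and> seq_mor FS n X Y \<phi> \<and> is_cone FS n X Y \<phi> Q \<and> Q \<in> NS"
      using \<phi> Q X Y unfolding seq_mor_fullsub_iff by blast
  qed
qed

lemma nang_functor_fullsub: "nang_functor FS C n NS N id id"
  unfolding nang_functor_def
proof (intro conjI)
  let ?\<eta> = "\<lambda>A. idm C (sO C A)"
  have unchanged: "(\<lambda>i. if i = n then cmp C (?\<eta> (fst X 1)) (id (snd X n)) else id (snd X i)) = snd X"
    if "X \<in> N" for X
  proof -
    have "snd X n \<in> hom C (fst X n) (sO C (fst X 1))"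
      using angle_nseq[OF that] unfolding is_nseq_def by (auto split: prod.splits)
    then show ?thesis
      using cmp_idm_left by (auto simp: fun_eq_iff)
  qed
  show "\<exists>\<eta>. (\<forall>A\<in>ob FS. is_iso C (id (sO FS A)) (sO C (id A)) (\<eta> A)) \<and>
      (\<forall>A B f. f \<in> hom FS A B \<longrightarrow> cmp C (\<eta> B) (id (sM FS f)) = cmp C (sM C (id f)) (\<eta> A)) \<and>
      (\<forall>X\<in>NS. (id \<circ> fst X, \<lambda>i. if i = n then cmp C (\<eta> (fst X 1)) (id (snd X n)) else id (snd X i)) \<in> N)"
  proof (intro exI[of _ ?\<eta>] conjI allI impI ballI)
    fix A assume "A \<in> ob FS"
    then show "is_iso C (id (sO FS A)) (sO C (id A)) (?\<eta> A)"
      using idm_iso sO_ob subset by auto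
  next
    fix A B f assume "f \<in> hom FS A B"
    then have "sM C f \<in> hom C (sO C A) (sO C B)"
      using sM_hom by (simp split: if_splits)
    then show "cmp C (?\<eta> B) (id (sM FS f)) = cmp C (sM C (id f)) (?\<eta> A)"
      using cmp_idm_left cmp_idm_right by simp
  next
    fix X assume "X \<in> NS"
    then show "(id \<circ> fst X, \<lambda>i. if i = n then cmp C (?\<eta> (fst X 1)) (id (snd X n)) else id (snd X i)) \<in> N"
      using unchanged[of X] by simp
  qed
qed (use subset in \<open>auto split: if_splits\<close>)

lemma nang_subcat_fullsub: "nang_subcat C n N S NS"
  unfolding nang_subcat_def
  using subset isomorphic_closed nangulated_fullsub nang_functor_fullsub by blast

end

lemma (in group_hom) subgroup_vimage: "subgroup K H \<Longrightarrow> subgroup {a \<in> carrier G. h a \<in> K} G"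
  by (rule G.subgroupI)
    (auto simp: subgroup.one_closed subgroup.m_inv_closed subgroup.m_closed hom_mult hom_inv)

sublocale K0_subgroup \<subseteq> nangulated_subclass C n N class_objs
proof
  show "class_objs \<subseteq> ob C"
    unfolding class_objs_def by blast
  show "\<exists>Z\<in>class_objs. is_zero_obj C Z"
    using zero_obj_class_objs is_zero_obj_zero_obj by blast
qed (use sO_class_objs_iff biprod_class_objs isomorphic_class_objs angle_exists_class_objs in blast)+

theorem lemma4p5:
  fixes C :: "('o, 'm) catS" and n :: nat and N :: "('o, 'm) nseq set"
    and H :: "('o set \<Rightarrow>\<^sub>0 int) set set"
  assumes "n \<ge> 3" and "odd n"
    and "nangulated C n N"
    and "subgroup H (K0 C n N)"
  shows "nang_subcat C n N {A \<in> ob C. K0cls C n N A \<in> H}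
           {X \<in> N. \<forall>i\<in>{1..n}. fst X i \<in> {A \<in> ob C. K0cls C n N A \<in> H}}
       \<and> complete_sub C n N {A \<in> ob C. K0cls C n N A \<in> H}
       \<and> dense_sub C {A \<in> ob C. K0cls C n N A \<in> H}"
proof -
  interpret odd_nangulated_category C n N
    using assms by unfold_locales
  let ?G = "{a \<in> carrier (Fgrp C). Rgrp C n N #>\<^bsub>Fgrp C\<^esub> a \<in> H}"
  have "subgroup ?G (Fgrp C)"
    using group_hom.subgroup_vimage[OF K0_projection_hom assms(4)] .
  moreover have "Rgrp C n N \<subseteq> ?G"
    using K0_projection_Rgrp subgroup.one_closed[OF assms(4)] subgroup.subset[OF Rgrp_subgroup] by auto
  ultimately interpret K0_subgroup C n N ?G
    unfolding K0_subgroup_def K0_subgroup_axioms_def using odd_nangulated_category_axioms by blast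
  have "{A \<in> ob C. K0cls C n N A \<in> H} = class_objs"
    unfolding class_objs_def K0cls_def using gen_carrier by auto
  then show ?thesis
    using nang_subcat_fullsub complete_class_objs dense_sub_class_objs unfolding complete_sub_def by auto
qed

end
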